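(* Let $p,q$ be natural numbers and let $T=T_v$ with $v=\{(p_n,\ell_n,q_n,m_n):n\in\mathbb N\}\in\mathcal W$. If the set $$\Big\{n\in\mathbb N:\ \frac{q_n}{q}=\frac{p_n}{p}\in\mathbb N\Big\}$$ is infinite, then $T^p\times T^q$ and $T^{-p}\times T^q$ are conservative.
   Context: Rank-one construction (cutting and stacking): let $a_n,b_n,c_n,d_n$ ($n\ge 0$) be sequences of positive integers. Let $G_0$ be the unit interval $[0,1)$, a column of height $H_0=1$ (set $h_0=1$). Given the column $G_n$ of height $H_n$, form $G_{n+1}$ by cutting $G_n$ into four subcolumns of equal width, placing $a_n,b_n,c_n,d_n$ spacers on top of the first, second, third and fourth subcolumns respectively, and stacking the subcolumns from left to right. This defines a Lebesgue-measure-preserving invertible transformation $T$ on a subset of $\mathbb R$ with Lebesgue measure $\mu$. Put $p_n=H_n+a_n$, $\ell_n=H_n+b_n$, $q_n=H_n+c_n$, $m_n=H_n+d_n$ and $h_{n+1}=p_n+\ell_n+q_n+H_n$. Write $T=T_v$ with $v=\{(p_n,\ell_n,q_n,m_n)\}$. $\mathcal W$ is the set of such $v$ with $\lim p_n/h_n=\infty$, $\ell_n>n(p_n+q_n+2h_n)$ and $m_n>n\,h_{n+1}$ for all $n$. A measure-preserving $S$ is conservative if for every set $A$ of positive measure there is $n\ge1$ with $\mu(S^{-n}A\cap A)>0$. *)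

theory Defs
  imports "HOL-Analysis.Analysis"
begin

text \<open>Rank-one cutting-and-stacking construction with four subcolumns.
  The data are the spacer sequences a, b, c, d (positive integers).
  Column G_n has height rk_H n; each level of G_n is an interval of width rk_w n = 4^(-n).
  Spacers added at stage n are fresh intervals of width rk_w (n+1) laid
  consecutively to the right of everything used so far (starting at rk_S n).\<close>

fun rk_H :: "(nat \<Rightarrow> nat) \<Rightarrow> (nat \<Rightarrow> nat) \<Rightarrow> (nat \<Rightarrow> nat) \<Rightarrow> (nat \<Rightarrow> nat) \<Rightarrow> nat \<Rightarrow> nat" where
  "rk_H a b c d 0 = 1"
| "rk_H a b c d (Suc n) = 4 * rk_H a b c d n + a n + b n + c n + d n"

definition rk_w :: "nat \<Rightarrow> real" where
  "rk_w n = (1/4) ^ n"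

text \<open>Right end of the part of the real line used by column G_n.\<close>
fun rk_S :: "(nat \<Rightarrow> nat) \<Rightarrow> (nat \<Rightarrow> nat) \<Rightarrow> (nat \<Rightarrow> nat) \<Rightarrow> (nat \<Rightarrow> nat) \<Rightarrow> nat \<Rightarrow> real" where
  "rk_S a b c d 0 = 1"
| "rk_S a b c d (Suc n) = rk_S a b c d n + real (a n + b n + c n + d n) * rk_w (Suc n)"

text \<open>Left endpoint of level j (0 = bottom) of column G_n.\<close>
fun rk_lev :: "(nat \<Rightarrow> nat) \<Rightarrow> (nat \<Rightarrow> nat) \<Rightarrow> (nat \<Rightarrow> nat) \<Rightarrow> (nat \<Rightarrow> nat) \<Rightarrow> nat \<Rightarrow> nat \<Rightarrow> real" where
  "rk_lev a b c d 0 j = 0"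
| "rk_lev a b c d (Suc n) j =
    (let Hn = rk_H a b c d n; A = a n; B = b n; C = c n;
         w = rk_w (Suc n); S = rk_S a b c d n in
     if j < Hn then rk_lev a b c d n j
     else if j < Hn + A then S + real (j - Hn) * w
     else if j < 2*Hn + A then rk_lev a b c d n (j - (Hn + A)) + w
     else if j < 2*Hn + A + B then S + real (A + (j - (2*Hn + A))) * w
     else if j < 3*Hn + A + B then rk_lev a b c d n (j - (2*Hn + A + B)) + 2*w
     else if j < 3*Hn + A + B + C then S + real (A + B + (j - (3*Hn + A + B))) * w
     else if j < 4*Hn + A + B + C then rk_lev a b c d n (j - (3*Hn + A + B + C)) + 3*w
     else S + real (A + B + C + (j - (4*Hn + A + B + C))) * w)"

definition rk_level :: "(nat \<Rightarrow> nat) \<Rightarrow> (nat \<Rightarrow> nat) \<Rightarrow> (nat \<Rightarrow> nat) \<Rightarrow> (nat \<Rightarrow> nat) \<Rightarrow> nat \<Rightarrow> nat \<Rightarrow> real set" where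
  "rk_level a b c d n j = {rk_lev a b c d n j ..< rk_lev a b c d n j + rk_w n}"

definition rk_X :: "(nat \<Rightarrow> nat) \<Rightarrow> (nat \<Rightarrow> nat) \<Rightarrow> (nat \<Rightarrow> nat) \<Rightarrow> (nat \<Rightarrow> nat) \<Rightarrow> real set" where
  "rk_X a b c d = (\<Union>n. \<Union>j\<in>{..<rk_H a b c d n}. rk_level a b c d n j)"

text \<open>T maps level j of G_n onto level j+1 by translation (j+1 < H_n); this is
  consistent in n. Where T is undefined (a null set) we let it be the identity.\<close>
definition rk_T :: "(nat \<Rightarrow> nat) \<Rightarrow> (nat \<Rightarrow> nat) \<Rightarrow> (nat \<Rightarrow> nat) \<Rightarrow> (nat \<Rightarrow> nat) \<Rightarrow> real \<Rightarrow> real" where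
  "rk_T a b c d x =
     (if \<exists>n j. Suc j < rk_H a b c d n \<and> x \<in> rk_level a b c d n j
      then (let (n, j) = (SOME (n, j). Suc j < rk_H a b c d n \<and> x \<in> rk_level a b c d n j)
            in x - rk_lev a b c d n j + rk_lev a b c d n (Suc j))
      else x)"

definition rk_Tinv :: "(nat \<Rightarrow> nat) \<Rightarrow> (nat \<Rightarrow> nat) \<Rightarrow> (nat \<Rightarrow> nat) \<Rightarrow> (nat \<Rightarrow> nat) \<Rightarrow> real \<Rightarrow> real" where
  "rk_Tinv a b c d x =
     (if \<exists>n j. Suc j < rk_H a b c d n \<and> x \<in> rk_level a b c d n (Suc j)
      then (let (n, j) = (SOME (n, j). Suc j < rk_H a b c d n \<and> x \<in> rk_level a b c d n (Suc j))
            in x - rk_lev a b c d n (Suc j) + rk_lev a b c d n j)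
      else x)"

definition rk_M :: "(nat \<Rightarrow> nat) \<Rightarrow> (nat \<Rightarrow> nat) \<Rightarrow> (nat \<Rightarrow> nat) \<Rightarrow> (nat \<Rightarrow> nat) \<Rightarrow> real measure" where
  "rk_M a b c d = restrict_space lebesgue (rk_X a b c d)"

definition rk_p where "rk_p a b c d n = rk_H a b c d n + a n"
definition rk_l where "rk_l a b c d n = rk_H a b c d n + b n"
definition rk_q where "rk_q a b c d n = rk_H a b c d n + c n"
definition rk_m where "rk_m a b c d n = rk_H a b c d n + d n"

fun rk_h :: "(nat \<Rightarrow> nat) \<Rightarrow> (nat \<Rightarrow> nat) \<Rightarrow> (nat \<Rightarrow> nat) \<Rightarrow> (nat \<Rightarrow> nat) \<Rightarrow> nat \<Rightarrow> nat" where
  "rk_h a b c d 0 = 1"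
| "rk_h a b c d (Suc n) = rk_p a b c d n + rk_l a b c d n + rk_q a b c d n + rk_H a b c d n"

definition in_W :: "(nat \<Rightarrow> nat) \<Rightarrow> (nat \<Rightarrow> nat) \<Rightarrow> (nat \<Rightarrow> nat) \<Rightarrow> (nat \<Rightarrow> nat) \<Rightarrow> bool" where
  "in_W a b c d \<longleftrightarrow>
     filterlim (\<lambda>n. real (rk_p a b c d n) / real (rk_h a b c d n)) at_top sequentially
   \<and> (\<forall>n. rk_l a b c d n > n * (rk_p a b c d n + rk_q a b c d n + 2 * rk_h a b c d n))
   \<and> (\<forall>n. rk_m a b c d n > n * rk_h a b c d (Suc n))"

definition conservative :: "'a measure \<Rightarrow> ('a \<Rightarrow> 'a) \<Rightarrow> bool" where
  "conservative M S \<longleftrightarrow>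
     (\<forall>A\<in>sets M. emeasure M A > 0 \<longrightarrow> (\<exists>n\<ge>1. emeasure M ((S ^^ n) -` A \<inter> A) > 0))"

end

theory Submission
  imports Defs
begin

text \<open>
  Every level of the column G_t is a cell of the 4-adic grid of mesh 4^(-t),
  and T translates each level onto the next one.  G_(t+1) contains four copies of G_t; the
  second copy lies H_t + a_t levels above the first and the fourth lies H_t + c_t levels
  above the third.  Hence T^(H_t + a_t) and its inverse exchange the first two quarters of
  every level of G_t by translation, and T^(H_t + c_t) exchanges the last two quarters.  If
  H_t + a_t = k p and H_t + c_t = k q, the k-th power of (x, y) \<mapsto> (T^p x, T^q y), or of
  (x, y) \<mapsto> (T^(-p) x, T^q y), thus acts on a part of a square L \<times> L' (L, L' levels of
  G_t) as a measure preserving swap of quarter squares.  A grid version of the Lebesgue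
  density theorem shows that a set A of positive measure almost fills such a square for
  arbitrarily large t in any infinite set, and then the swap returns a part of A of
  positive measure to A.
\<close>

section \<open>Levels of the columns as cells of a 4-adic grid\<close>

text \<open>Level j of G_(n+1) is a quarter of some level of G_n or a spacer; hence it is the
  cell with index rk_cell n j of the grid of mesh 4^(-n) on [0, \<infinity>).  The recursion
  mirrors the one defining rk_lev.\<close>

fun rk_cell :: "(nat \<Rightarrow> nat) \<Rightarrow> (nat \<Rightarrow> nat) \<Rightarrow> (nat \<Rightarrow> nat) \<Rightarrow> (nat \<Rightarrow> nat) \<Rightarrow> nat \<Rightarrow> nat \<Rightarrow> nat" where
  "rk_cell a b c d 0 j = 0"
| "rk_cell a b c d (Suc n) j =
    (let Hn = rk_H a b c d n; A = a n; B = b n; C = c n in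
     if j < Hn then 4 * rk_cell a b c d n j
     else if j < Hn + A then 4*Hn + (j - Hn)
     else if j < 2*Hn + A then 4 * rk_cell a b c d n (j - (Hn + A)) + 1
     else if j < 2*Hn + A + B then 4*Hn + A + (j - (2*Hn + A))
     else if j < 3*Hn + A + B then 4 * rk_cell a b c d n (j - (2*Hn + A + B)) + 2
     else if j < 3*Hn + A + B + C then 4*Hn + A + B + (j - (3*Hn + A + B))
     else if j < 4*Hn + A + B + C then 4 * rk_cell a b c d n (j - (3*Hn + A + B + C)) + 3
     else 4*Hn + A + B + C + (j - (4*Hn + A + B + C)))"

text \<open>Of the spacers only those on top of the last subcolumn need to be present: they make
  the top level of G_(n+1) a spacer lying to the right of [0, S n), so that every point of
  the space lies below the top of some column.\<close>

locale rank_one =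
  fixes a b c d :: "nat \<Rightarrow> nat"
  assumes top_spacers_pos: "\<And>n. 0 < d n"
begin

abbreviation "H \<equiv> rk_H a b c d"
abbreviation "lev \<equiv> rk_lev a b c d"
abbreviation "S \<equiv> rk_S a b c d"
abbreviation "level \<equiv> rk_level a b c d"
abbreviation "X \<equiv> rk_X a b c d"
abbreviation "T \<equiv> rk_T a b c d"
abbreviation "Ti \<equiv> rk_Tinv a b c d"
abbreviation "M \<equiv> rk_M a b c d"
abbreviation "cell \<equiv> rk_cell a b c d"
abbreviation "w \<equiv> rk_w"

lemma w_Suc: "w (Suc n) = w n / 4"
  by (simp add: rk_w_def)

lemma w_pos: "0 < w n"
  by (simp add: rk_w_def)

lemma w_mono: "n \<le> n' \<Longrightarrow> w n' \<le> w n"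
  by (simp add: rk_w_def power_decreasing)

lemma w_split: "m \<le> t \<Longrightarrow> w m = real (4 ^ (t - m)) * w t"
proof -
  assume "m \<le> t"
  then have "w t = w m * (1/4) ^ (t - m)"
    by (simp add: rk_w_def flip: power_add)
  then show ?thesis by (simp add: power_one_over)
qed

lemma H_pos: "0 < H n"
  by (induction n) auto

lemma S_eq: "S n = real (H n) * w n"
  by (induction n) (auto simp: w_Suc field_simps rk_w_def)

lemma S_pos: "0 < S n"
  using S_eq H_pos w_pos by simp

lemma S_mono: "n \<le> n' \<Longrightarrow> S n \<le> S n'"
proof (induction n' rule: dec_induct)
  case (step k)
  have "0 \<le> real (a k + b k + c k + d k) * w (Suc k)" using w_pos[of "Suc k"] by simp
  then show ?case using step by simp
qed simp

lemma lev_eq_cell: "lev n j = real (cell n j) * w n"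
proof (induction n arbitrary: j)
  case (Suc n)
  then show ?case by (auto simp: Let_def S_eq w_Suc field_simps of_nat_diff)
qed simp

text \<open>The r-th copy (r < 4) of G_n inside G_(n+1) starts at level off n r.\<close>

definition off :: "nat \<Rightarrow> nat \<Rightarrow> nat" where
  "off n r = (if r = 0 then 0 else if r = 1 then H n + a n else if r = 2 then 2 * H n + a n + b n
              else 3 * H n + a n + b n + c n)"

lemma off_copy_le: "r < 4 \<Longrightarrow> off n r + H n \<le> 4 * H n + a n + b n + c n"
  by (auto simp: off_def)

lemma cell_off: "r < 4 \<Longrightarrow> j < H n \<Longrightarrow> cell (Suc n) (off n r + j) = 4 * cell n j + r"
proof -
  assume "r < 4" "j < H n"
  then consider "r = 0" | "r = 1" | "r = 2" | "r = 3" by linarith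
  then show ?thesis using \<open>j < H n\<close> by cases (auto simp: off_def Let_def)
qed

lemma lev_off: "r < 4 \<Longrightarrow> j < H n \<Longrightarrow> lev (Suc n) (off n r + j) = lev n j + real r * w (Suc n)"
  by (simp only: lev_eq_cell cell_off) (simp add: w_Suc field_simps)

lemma copy_or_spacer:
  assumes "j < H (Suc n)"
  shows "(\<exists>r<4. \<exists>i<H n. j = off n r + i) \<or> 4 * H n \<le> cell (Suc n) j"
proof -
  let ?h = "H n" and ?A = "a n" and ?B = "b n" and ?C = "c n"
  have copy: "\<exists>r<4. \<exists>i<?h. j = off n r + i"
    if "off n r \<le> j" "j < off n r + ?h" "r < 4" for r
  proof -
    have "j = off n r + (j - off n r)" "j - off n r < ?h" using that by auto
    then show ?thesis using that(3) by blast
  qed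
  consider "j < ?h" | "?h \<le> j" "j < ?h + ?A" | "?h + ?A \<le> j" "j < 2*?h + ?A"
    | "2*?h + ?A \<le> j" "j < 2*?h + ?A + ?B" | "2*?h + ?A + ?B \<le> j" "j < 3*?h + ?A + ?B"
    | "3*?h + ?A + ?B \<le> j" "j < 3*?h + ?A + ?B + ?C" | "3*?h + ?A + ?B + ?C \<le> j" "j < 4*?h + ?A + ?B + ?C"
    | "4*?h + ?A + ?B + ?C \<le> j" by linarith
  then show ?thesis
    by cases (use copy[of 0] copy[of 1] copy[of 2] copy[of 3] in \<open>auto simp: off_def Let_def\<close>)
qed

lemma cell_lt: "j < H n \<Longrightarrow> cell n j < H n"
proof (induction n arbitrary: j)
  case (Suc n)
  let ?h = "H n" and ?A = "a n" and ?B = "b n" and ?C = "c n"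
  have IH: "4 * cell n k + 3 < 4 * ?h" if "k < ?h" for k
    using Suc.IH[OF that] by linarith
  consider "j < ?h" | "?h \<le> j" "j < ?h + ?A" | "?h + ?A \<le> j" "j < 2*?h + ?A"
    | "2*?h + ?A \<le> j" "j < 2*?h + ?A + ?B" | "2*?h + ?A + ?B \<le> j" "j < 3*?h + ?A + ?B"
    | "3*?h + ?A + ?B \<le> j" "j < 3*?h + ?A + ?B + ?C" | "3*?h + ?A + ?B + ?C \<le> j" "j < 4*?h + ?A + ?B + ?C"
    | "4*?h + ?A + ?B + ?C \<le> j" by linarith
  then show ?case
  proof cases
    case 1 with IH[of j] show ?thesis by (simp add: Let_def)
  next
    case 3
    then have "j - (?h + ?A) < ?h" by linarith
    from IH[OF this] 3 show ?thesis by (simp add: Let_def)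
  next
    case 5
    then have "j - (2*?h + ?A + ?B) < ?h" by linarith
    from IH[OF this] 5 show ?thesis by (simp add: Let_def)
  next
    case 7
    then have "j - (3*?h + ?A + ?B + ?C) < ?h" by linarith
    from IH[OF this] 7 show ?thesis by (simp add: Let_def)
  qed (use Suc.prems in \<open>simp_all add: Let_def\<close>)
qed simp

lemma cell_zero: "cell n 0 = 0"
  by (induction n) (auto simp: Let_def H_pos)

lemma cell_top: "4 * H n \<le> cell (Suc n) (H (Suc n) - 1)"
proof -
  have "\<not> H (Suc n) - 1 < 4 * H n + a n + b n + c n" using top_spacers_pos[of n] by simp
  then show ?thesis by (simp only: rk_cell.simps Let_def if_False) (simp add: not_less)
qed

lemma cell_surj: "i < H n \<Longrightarrow> \<exists>j<H n. cell n j = i"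
proof (induction n arbitrary: i)
  case (Suc n)
  let ?h = "H n" and ?A = "a n" and ?B = "b n" and ?C = "c n"
  show ?case
  proof (cases "i < 4 * ?h")
    case True
    then have "i div 4 < ?h" by simp
    then obtain j where j: "j < ?h" "cell n j = i div 4" using Suc.IH by blast
    have r: "i mod 4 < 4" by simp
    have "off n (i mod 4) + j < H (Suc n)" using off_copy_le[OF r, of n] j(1) by simp
    moreover have "cell (Suc n) (off n (i mod 4) + j) = i" using cell_off[OF r j(1)] j(2) by simp
    ultimately show ?thesis by blast
  next
    case False
    consider "i < 4 * ?h + ?A" | "4*?h + ?A \<le> i" "i < 4 * ?h + ?A + ?B"
      | "4*?h + ?A + ?B \<le> i" "i < 4 * ?h + ?A + ?B + ?C" | "4*?h + ?A + ?B + ?C \<le> i" by linarith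
    then show ?thesis
    proof cases
      case 1
      then show ?thesis using False Suc.prems
        by (intro exI[of _ "i - 3 * ?h"]) (auto simp: Let_def)
    next
      case 2
      then show ?thesis using False Suc.prems
        by (intro exI[of _ "i - 2 * ?h"]) (auto simp: Let_def)
    next
      case 3
      then show ?thesis using False Suc.prems
        by (intro exI[of _ "i - ?h"]) (auto simp: Let_def)
    next
      case 4
      then show ?thesis using False Suc.prems
        by (intro exI[of _ i]) (auto simp: Let_def)
    qed
  qed
qed simp

lemma cell_inj: "j < H n \<Longrightarrow> j' < H n \<Longrightarrow> cell n j = cell n j' \<Longrightarrow> j = j'"
proof -
  have "{..<H n} \<subseteq> cell n ` {..<H n}" using cell_surj by fastforce
  then have "inj_on (cell n) {..<H n}" by (intro finite_surj_inj) auto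
  then show "j < H n \<Longrightarrow> j' < H n \<Longrightarrow> cell n j = cell n j' \<Longrightarrow> j = j'" by (auto simp: inj_on_def)
qed

end

definition grid :: "nat \<Rightarrow> nat \<Rightarrow> real set" where
  "grid t i = {real i * rk_w t ..< real (Suc i) * rk_w t}"

context rank_one
begin

lemma level_grid: "level n j = grid n (cell n j)"
  by (simp add: rk_level_def grid_def lev_eq_cell algebra_simps)

lemma grid_bounds: "x \<in> grid t i \<Longrightarrow> real i * w t \<le> x \<and> x < real (Suc i) * w t"
  by (simp add: grid_def)

lemma grid_nonneg: "x \<in> grid t i \<Longrightarrow> 0 \<le> x"
  using grid_bounds[of x t i] w_pos[of t] by (meson mult_nonneg_nonneg of_nat_0_le_iff less_imp_le order_trans)

lemma grid_sets: "grid t i \<in> sets lebesgue"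
  by (simp add: grid_def)

lemma grid_floor: "0 \<le> x \<Longrightarrow> x \<in> grid t (nat \<lfloor>x / w t\<rfloor>)"
proof -
  assume x: "0 \<le> x"
  let ?k = "\<lfloor>x / w t\<rfloor>"
  have wp: "0 < w t" by (rule w_pos)
  have "real_of_int ?k * w t \<le> x" "x < (real_of_int ?k + 1) * w t"
    by (metis of_int_floor_le pos_le_divide_eq wp, metis real_of_int_floor_add_one_gt pos_divide_less_eq wp)
  moreover have "0 \<le> ?k" using x wp by simp
  ultimately show ?thesis by (auto simp: grid_def add.commute)
qed

lemma grid_unique: "x \<in> grid t i \<Longrightarrow> x \<in> grid t i' \<Longrightarrow> i = i'"
proof -
  assume "x \<in> grid t i" "x \<in> grid t i'"
  then have "real i * w t < real (Suc i') * w t" "real i' * w t < real (Suc i) * w t"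
    by (auto simp: grid_def)
  then have "i < Suc i'" "i' < Suc i" by (metis mult_less_cancel_right_pos of_nat_less_iff w_pos)+
  then show "i = i'" by linarith
qed

lemma grid_index_lt: "x \<in> grid t i \<Longrightarrow> x < real N * w t \<Longrightarrow> i < N"
proof -
  assume "x \<in> grid t i" "x < real N * w t"
  then have "real i * w t < real N * w t" using grid_bounds by fastforce
  then show "i < N" using w_pos[of t] by (simp add: mult_less_cancel_right)
qed

lemma grid_diam: "x \<in> grid t i \<Longrightarrow> y \<in> grid t i \<Longrightarrow> \<bar>x - y\<bar> < w t"
  by (auto simp: grid_def algebra_simps)

lemma grid_nest:
  assumes tt: "t \<le> t'" and x: "x \<in> grid t i" "x \<in> grid t' i'"
  shows "grid t' i' \<subseteq> grid t i"
proof -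
  define k where "k = (4::nat) ^ (t' - t)"
  have wk: "w t = real k * w t'" using w_split[OF tt] by (simp add: k_def)
  have wp: "0 < w t'" by (rule w_pos)
  have "real (i * k) * w t' < real (Suc i') * w t'" "real i' * w t' < real (Suc i * k) * w t'"
    using x wk by (auto simp: grid_def algebra_simps)
  then have "i * k \<le> i'" "Suc i' \<le> Suc i * k"
    using wp by (simp_all only: mult_less_cancel_right_pos of_nat_less_iff)
  then have "real (i * k) * w t' \<le> real i' * w t'" "real (Suc i') * w t' \<le> real (Suc i * k) * w t'"
    using wp by (simp_all only: mult_le_cancel_right_pos of_nat_le_iff)
  then show ?thesis using wk by (auto simp: grid_def algebra_simps)
qed

lemma level_sub: "j < H n \<Longrightarrow> level n j \<subseteq> {0..<S n}"
proof
  fix x assume j: "j < H n" and x: "x \<in> level n j"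
  have "real (Suc (cell n j)) * w n \<le> real (H n) * w n"
    using cell_lt[OF j] w_pos[of n] by (intro mult_right_mono) auto
  then show "x \<in> {0..<S n}" using x grid_bounds[of x n "cell n j"] grid_nonneg[of x n "cell n j"]
    by (auto simp: level_grid S_eq)
qed

lemma in_level: "0 \<le> x \<Longrightarrow> x < S n \<Longrightarrow> \<exists>j<H n. x \<in> level n j"
proof -
  assume x: "0 \<le> x" "x < S n"
  let ?i = "nat \<lfloor>x / w n\<rfloor>"
  have xi: "x \<in> grid n ?i" by (rule grid_floor[OF x(1)])
  have "?i < H n" using grid_index_lt[OF xi] x(2) by (simp add: S_eq)
  then obtain j where "j < H n" "cell n j = ?i" using cell_surj by blast
  then show ?thesis using xi by (auto simp: level_grid)
qed

lemma X_eq: "X = (\<Union>n. {0..<S n})"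
proof
  show "X \<subseteq> (\<Union>n. {0..<S n})" using level_sub by (fastforce simp: rk_X_def)
  show "(\<Union>n. {0..<S n}) \<subseteq> X" using in_level by (fastforce simp: rk_X_def)
qed

lemma level_X: "j < H n \<Longrightarrow> level n j \<subseteq> X"
  by (auto simp: rk_X_def)

lemma level_unique: "x \<in> level n j \<Longrightarrow> x \<in> level n j' \<Longrightarrow> j < H n \<Longrightarrow> j' < H n \<Longrightarrow> j = j'"
  using grid_unique cell_inj by (metis level_grid)

lemma level_lt_S: "x \<in> level n j \<Longrightarrow> j < H n \<Longrightarrow> x < S n"
  using level_sub[of j n] by auto

lemma spacer_ge_S: "x \<in> level (Suc n) j \<Longrightarrow> 4 * H n \<le> cell (Suc n) j \<Longrightarrow> S n \<le> x"
proof -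
  assume x: "x \<in> level (Suc n) j" and p: "4 * H n \<le> cell (Suc n) j"
  have "S n = real (4 * H n) * w (Suc n)" by (simp add: S_eq w_Suc)
  also have "\<dots> \<le> real (cell (Suc n) j) * w (Suc n)" using p w_pos[of "Suc n"] by (intro mult_right_mono) auto
  also have "\<dots> \<le> x" using x grid_bounds by (simp add: level_grid)
  finally show ?thesis .
qed

lemma level_off_sub: "r < 4 \<Longrightarrow> j < H n \<Longrightarrow> level (Suc n) (off n r + j) \<subseteq> level n j"
proof -
  assume r: "r < 4" and j: "j < H n"
  have "real r * w (Suc n) + w (Suc n) \<le> w n" using r w_pos[of n] by (simp add: w_Suc field_simps)
  moreover have "0 \<le> real r * w (Suc n)" using w_pos[of "Suc n"] by simp
  ultimately show ?thesis unfolding rk_level_def lev_off[OF r j] by auto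
qed

end

section \<open>The transformation translates each level onto the next one\<close>

text \<open>Hilbert choice of a pair does not matter for a quantity that is the same for all
  admissible pairs; this is how the definitions of T and its inverse are unwound.\<close>

lemma some_pair_value:
  assumes "P n0 j0" and "\<And>n j. P n j \<Longrightarrow> f n j = f n0 j0"
  shows "(let (n, j) = (SOME (n, j). P n j) in f n j) = f n0 j0"
proof -
  define p where "p = (SOME (n, j). P n j)"
  have "P (fst p) (snd p)"
    using someI[of "\<lambda>(n, j). P n j" "(n0, j0)"] assms(1) unfolding p_def by (simp add: case_prod_beta)
  then show ?thesis using assms(2) unfolding p_def[symmetric] by (simp add: case_prod_beta)
qed

context rank_one
begin

lemma column_copy:
  assumes "n \<le> n'" "i' < H n'" "x \<in> level n' i'" "x < S n"
  shows "\<exists>s e. s \<le> i' \<and> i' < s + H n \<and> s + H n \<le> H n' \<and>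
           (\<forall>k<H n. level n' (s + k) \<subseteq> level n k \<and> lev n' (s + k) = lev n k + e)"
  using assms(1-3)
proof (induction n' arbitrary: i' rule: dec_induct)
  case base
  then show ?case by (intro exI[of _ 0] exI[of _ 0]) auto
next
  case (step m)
  from copy_or_spacer[OF step.prems(1)] show ?case
  proof
    assume "\<exists>r<4. \<exists>i<H m. i' = off m r + i"
    then obtain r i where r: "r < 4" and i: "i < H m" and i': "i' = off m r + i" by blast
    have "x \<in> level m i" using level_off_sub[OF r i] step.prems(2) i' by auto
    then obtain s e where se: "s \<le> i" "i < s + H n" "s + H n \<le> H m"
        "\<forall>k<H n. level m (s + k) \<subseteq> level n k \<and> lev m (s + k) = lev n k + e"
      using step.IH[OF i] by blast
    show ?thesis
    proof (intro exI[of _ "off m r + s"] exI[of _ "e + real r * w (Suc m)"] conjI allI impI)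
      show "off m r + s \<le> i'" "i' < off m r + s + H n" using se i' by auto
      show "off m r + s + H n \<le> H (Suc m)" using se off_copy_le[OF r, of m] by simp
      fix k assume k: "k < H n"
      then have sk: "s + k < H m" using se by simp
      show "level (Suc m) (off m r + s + k) \<subseteq> level n k"
        using level_off_sub[OF r sk] se k by (auto simp: add.assoc)
      show "lev (Suc m) (off m r + s + k) = lev n k + (e + real r * w (Suc m))"
        using lev_off[OF r sk] se k by (simp add: add.assoc)
    qed
  next
    assume "4 * H m \<le> cell (Suc m) i'"
    then have "S m \<le> x" by (rule spacer_ge_S[OF step.prems(2)])
    then show ?thesis using assms(4) S_mono[OF step.hyps(1)] by simp
  qed
qed

text \<open>Hence two levels (of possibly different columns) through the same point have the
  same distance to the level above them; \<delta> = 0 is the case needed for T, \<delta> = 1 the case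
  needed for its inverse.\<close>

lemma step_consistent:
  assumes "x \<in> level n (j + \<delta>)" "x \<in> level n' (j' + \<delta>)" "Suc j < H n" "Suc j' < H n'" "\<delta> \<le> 1"
  shows "lev n' (Suc j') - lev n' j' = lev n (Suc j) - lev n j"
proof -
  have *: "lev n2 (Suc j2) - lev n2 j2 = lev n1 (Suc j1) - lev n1 j1"
    if x: "x \<in> level n1 (j1 + \<delta>)" "x \<in> level n2 (j2 + \<delta>)" and j: "Suc j1 < H n1" "Suc j2 < H n2"
      and n: "n1 \<le> n2" for n1 n2 j1 j2
  proof -
    have "j1 + \<delta> < H n1" "j2 + \<delta> < H n2" using j assms(5) by auto
    then obtain s e where se: "s \<le> j2 + \<delta>" "j2 + \<delta> < s + H n1"
        "\<forall>k<H n1. level n2 (s + k) \<subseteq> level n1 k \<and> lev n2 (s + k) = lev n1 k + e"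
      using column_copy[OF n _ x(2) level_lt_S[OF x(1)]] by blast
    have k: "j2 + \<delta> - s < H n1" using se(1,2) by linarith
    have "level n2 (s + (j2 + \<delta> - s)) \<subseteq> level n1 (j2 + \<delta> - s)" using se(3) k by blast
    then have "x \<in> level n1 (j2 + \<delta> - s)" using x(2) se(1) by auto
    then have "j2 + \<delta> - s = j1 + \<delta>" using level_unique x(1) k \<open>j1 + \<delta> < H n1\<close> by blast
    then have j2: "j2 = s + j1" using se(1) by linarith
    show ?thesis using se(3) j(1) j2 by (simp flip: add_Suc_right)
  qed
  show ?thesis
  proof (cases "n \<le> n'")
    case True then show ?thesis using *[OF assms(1-4)] by simp
  next
    case False then show ?thesis using *[OF assms(2,1,4,3)] by simp
  qed
qed

text \<open>So the choice in the definition of T is immaterial: T translates level j onto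
  level j + 1, and its inverse translates back.\<close>

lemma T_eq:
  assumes x: "x \<in> level n j" and j: "Suc j < H n"
  shows "T x = x - lev n j + lev n (Suc j)"
proof -
  have "T x = (let (n', j') = SOME (n', j'). Suc j' < H n' \<and> x \<in> level n' j'
                in x - lev n' j' + lev n' (Suc j'))"
    unfolding rk_T_def using x j by auto
  also have "\<dots> = x - lev n j + lev n (Suc j)"
    using x j step_consistent[of x n j 0] by (intro some_pair_value) (auto simp: algebra_simps)
  finally show ?thesis .
qed

lemma Ti_eq:
  assumes x: "x \<in> level n (Suc j)" and j: "Suc j < H n"
  shows "Ti x = x - lev n (Suc j) + lev n j"
proof -
  have "Ti x = (let (n', j') = SOME (n', j'). Suc j' < H n' \<and> x \<in> level n' (Suc j')
                 in x - lev n' (Suc j') + lev n' j')"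
    unfolding rk_Tinv_def using x j by auto
  also have "\<dots> = x - lev n (Suc j) + lev n j"
    using x j step_consistent[of x n j 1] by (intro some_pair_value) (auto simp: algebra_simps)
  finally show ?thesis .
qed

lemma lev_mem_shift: "x \<in> level n j \<Longrightarrow> x - lev n j + lev n j' \<in> level n j'"
  by (auto simp: rk_level_def)

lemma T_pow: "x \<in> level n j \<Longrightarrow> j + k < H n \<Longrightarrow> (T ^^ k) x = x - lev n j + lev n (j + k)"
proof (induction k)
  case (Suc k)
  have "(T ^^ k) x \<in> level n (j + k)" using Suc lev_mem_shift[of x n j "j + k"] by simp
  then show ?case using T_eq[of "(T ^^ k) x" n "j + k"] Suc by simp
qed simp

lemma Ti_pow: "x \<in> level n j \<Longrightarrow> j < H n \<Longrightarrow> k \<le> j \<Longrightarrow> (Ti ^^ k) x = x - lev n j + lev n (j - k)"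
proof (induction k)
  case (Suc k)
  have jk: "j - k = Suc (j - Suc k)" using Suc.prems by simp
  have "(Ti ^^ k) x \<in> level n (Suc (j - Suc k))" using Suc lev_mem_shift[of x n j "j - k"] jk by simp
  then show ?case using Ti_eq[of "(Ti ^^ k) x" n "j - Suc k"] Suc jk by simp
qed simp

lemma T_cover: "x \<in> X \<Longrightarrow> \<exists>n j. Suc j < H n \<and> x \<in> level n j"
proof -
  assume "x \<in> X"
  then obtain n where x: "0 \<le> x" "x < S n" by (auto simp: X_eq)
  have "x < S (Suc n)" using x S_mono[of n "Suc n"] by simp
  then obtain j where j: "j < H (Suc n)" "x \<in> level (Suc n) j" using in_level x by blast
  have "Suc j < H (Suc n)"
  proof (rule ccontr)
    assume "\<not> Suc j < H (Suc n)"
    then have "j = H (Suc n) - 1" using j by simp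
    then have "S n \<le> x" using spacer_ge_S[OF j(2)] cell_top[of n] by simp
    then show False using x by simp
  qed
  then show ?thesis using j by blast
qed

lemma level_Suc_ge: "x \<in> level n (Suc j) \<Longrightarrow> Suc j < H n \<Longrightarrow> w n \<le> x"
proof -
  assume x: "x \<in> level n (Suc j)" and j: "Suc j < H n"
  have "cell n (Suc j) \<noteq> 0" using cell_inj[of "Suc j" n 0] cell_zero[of n] j by auto
  then have "w n \<le> real (cell n (Suc j)) * w n" using w_pos[of n] by simp
  then show ?thesis using x grid_bounds by (force simp: level_grid)
qed

lemma Ti_cover: "x \<in> X \<Longrightarrow> x \<noteq> 0 \<Longrightarrow> \<exists>n j. Suc j < H n \<and> x \<in> level n (Suc j)"
proof -
  assume xX: "x \<in> X" and x0: "x \<noteq> 0"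
  then obtain n where x: "0 \<le> x" "x < S n" by (auto simp: X_eq)
  obtain n1 where n1: "(1/4::real) ^ n1 < x" using real_arch_pow_inv[of x "1/4"] x x0 by auto
  let ?n = "max n n1"
  have "x < S ?n" using x S_mono[of n ?n] by simp
  then obtain j where j: "j < H ?n" "x \<in> level ?n j" using in_level x by blast
  have "w ?n \<le> w n1" "w n1 < x" using w_mono[of n1 ?n] n1 by (auto simp: rk_w_def)
  then have "w ?n < x" by linarith
  then have "x \<notin> level ?n 0" using grid_bounds[of x ?n 0] by (auto simp: level_grid cell_zero)
  then have "j \<noteq> 0" using j(2) by (metis)
  then obtain j0 where "j = Suc j0" using not0_implies_Suc by blast
  then show ?thesis using j by blast
qed

lemma T_X: "x \<in> X \<Longrightarrow> T x \<in> X"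
proof -
  assume "x \<in> X"
  then obtain n j where nj: "Suc j < H n" "x \<in> level n j" using T_cover by blast
  then have "T x \<in> level n (Suc j)" using T_eq lev_mem_shift by simp
  then show ?thesis using level_X[OF nj(1)] by auto
qed

lemma Ti_zero: "Ti 0 = 0"
proof -
  have "\<not> (\<exists>n j. Suc j < H n \<and> (0::real) \<in> level n (Suc j))"
    using level_Suc_ge w_pos by (meson not_le)
  then show ?thesis unfolding rk_Tinv_def by (simp only: if_False)
qed

lemma Ti_X: "x \<in> X \<Longrightarrow> Ti x \<in> X"
proof (cases "x = 0")
  case True then show "x \<in> X \<Longrightarrow> Ti x \<in> X" using Ti_zero by simp
next
  case False
  assume "x \<in> X"
  then obtain n j where nj: "Suc j < H n" "x \<in> level n (Suc j)" using Ti_cover False by blast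
  then have "Ti x \<in> level n j" using Ti_eq lev_mem_shift by simp
  then show ?thesis using level_X[of j n] nj(1) by auto
qed

end

section \<open>Piecewise translations of the real line\<close>

lemma translation_vimage_sets:
  assumes "B \<in> sets lebesgue"
  shows "(\<lambda>x::real. x + e) -` B \<in> sets lebesgue"
proof -
  have eq: "(\<lambda>x::real. x + e) -` B = (\<lambda>x. - e + x) ` B"
    by (auto simp: image_iff) (metis add.commute diff_add_cancel minus_add_cancel uminus_add_conv_diff)
  show ?thesis unfolding eq by (rule lebesgue_sets_translation[OF assms])
qed

lemma emeasure_translation: "emeasure lebesgue ((\<lambda>x::real. e + x) ` B) = emeasure lebesgue B"
  using emeasure_lebesgue_affine[of 1 e B] by (simp add: add.commute)

lemma piecewise_translation_measurable:
  fixes f :: "real \<Rightarrow> real" and P :: "(real set \<times> real) set"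
  assumes X: "X \<in> sets lebesgue"
    and P: "countable P" "\<And>B e. (B, e) \<in> P \<Longrightarrow> B \<in> sets lebesgue"
    and cover: "\<And>x. x \<in> X \<Longrightarrow> \<exists>(B, e)\<in>P. x \<in> B"
    and translation: "\<And>B e x. (B, e) \<in> P \<Longrightarrow> x \<in> B \<Longrightarrow> x \<in> X \<Longrightarrow> f x = x + e"
    and into: "\<And>x. x \<in> X \<Longrightarrow> f x \<in> X"
  shows "f \<in> measurable (restrict_space lebesgue X) (restrict_space lebesgue X)"
proof (rule measurableI)
  show "f x \<in> space (restrict_space lebesgue X)" if "x \<in> space (restrict_space lebesgue X)" for x
    using into that by simp
  fix C assume "C \<in> sets (restrict_space lebesgue X)"
  then have C: "C \<in> sets lebesgue" "C \<subseteq> X" using X by (auto simp: sets_restrict_space_iff)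
  have "f -` C \<inter> X = (\<Union>(B, e)\<in>P. B \<inter> X \<inter> (\<lambda>x. x + e) -` C)"
    using cover translation by fastforce
  also have "\<dots> \<in> sets lebesgue"
    using P X C by (intro sets.countable_UN'') (auto intro: translation_vimage_sets)
  finally show "f -` C \<inter> space (restrict_space lebesgue X) \<in> sets (restrict_space lebesgue X)"
    using X by (auto simp: sets_restrict_space_iff)
qed

definition interval_swap :: "real \<Rightarrow> real \<Rightarrow> real \<Rightarrow> real" where
  "interval_swap u v x =
     (if u \<le> x \<and> x < u + v then x + v else if u + v \<le> x \<and> x < u + 2 * v then x - v else x)"

lemma interval_swap_measurable:
  assumes X: "X \<in> sets lebesgue" and v: "0 < v" and I: "{u..<u + 2 * v} \<subseteq> X"
  shows "interval_swap u v \<in> measurable (restrict_space lebesgue X) (restrict_space lebesgue X)"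
proof (rule piecewise_translation_measurable[OF X,
      of "{({u..<u + v}, v), ({u + v..<u + 2 * v}, - v), (- {u..<u + 2 * v}, 0)}"])
  show "interval_swap u v x \<in> X" if "x \<in> X" for x
    using that I v by (auto simp: interval_swap_def)
qed (auto simp: interval_swap_def)

lemma emeasure_Un3:
  assumes "A \<in> sets M" "B \<in> sets M" "C \<in> sets M" "A \<inter> B = {}" "A \<inter> C = {}" "B \<inter> C = {}"
  shows "emeasure M (A \<union> B \<union> C) = emeasure M A + emeasure M B + emeasure M C"
  using assms by (simp add: plus_emeasure Int_Un_distrib2)

lemma interval_swap_vimage:
  assumes v: "0 < v" and I: "{u..<u + 2 * v} \<subseteq> X" and B: "B \<subseteq> X"
  shows "interval_swap u v -` B \<inter> X = (B - {u..<u + 2 * v})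
           \<union> (\<lambda>x. - v + x) ` (B \<inter> {u + v..<u + 2 * v}) \<union> (\<lambda>x. v + x) ` (B \<inter> {u..<u + v})"
    (is "?f -` B \<inter> X = (B - ?I) \<union> ?P2 \<union> ?P3")
proof (intro equalityI subsetI)
  fix x assume x: "x \<in> ?f -` B \<inter> X"
  consider "x \<in> {u..<u + v}" | "x \<in> {u + v..<u + 2 * v}" | "x \<notin> ?I" by fastforce
  then show "x \<in> (B - ?I) \<union> ?P2 \<union> ?P3"
  proof cases
    case 1
    then have "x + v \<in> B \<inter> {u + v..<u + 2 * v}" using x v by (simp add: interval_swap_def)
    then show ?thesis by (intro UnI1 UnI2) (rule image_eqI[of _ _ "x + v"], auto)
  next
    case 2
    then have "x - v \<in> B \<inter> {u..<u + v}" using x v by (simp add: interval_swap_def)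
    then show ?thesis by (intro UnI2) (rule image_eqI[of _ _ "x - v"], auto)
  qed (use x v in \<open>auto simp: interval_swap_def\<close>)
qed (use B I v in \<open>auto simp: interval_swap_def\<close>)

lemma interval_swap_distr:
  assumes X: "X \<in> sets lebesgue" and v: "0 < v" and I: "{u..<u + 2 * v} \<subseteq> X"
  shows "distr (restrict_space lebesgue X) (restrict_space lebesgue X) (interval_swap u v)
         = restrict_space lebesgue X" (is "distr ?M ?M ?f = ?M")
proof (rule measure_eqI)
  fix B assume "B \<in> sets (distr ?M ?M ?f)"
  then have BM: "B \<in> sets ?M" by simp
  then have B: "B \<in> sets lebesgue" "B \<subseteq> X" using X by (auto simp: sets_restrict_space_iff)
  let ?I = "{u..<u + 2 * v}" and ?I1 = "{u..<u + v}" and ?I2 = "{u + v..<u + 2 * v}"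
  let ?P2 = "(\<lambda>x. - v + x) ` (B \<inter> ?I2)" and ?P3 = "(\<lambda>x. v + x) ` (B \<inter> ?I1)"
  note vimage = interval_swap_vimage[OF v I B(2)]
  have sets: "B - ?I \<in> sets lebesgue" "B \<inter> ?I1 \<in> sets lebesgue" "B \<inter> ?I2 \<in> sets lebesgue"
    using B by auto
  have translated_sets: "?P2 \<in> sets lebesgue" "?P3 \<in> sets lebesgue"
    by (rule lebesgue_sets_translation[OF sets(3)], rule lebesgue_sets_translation[OF sets(2)])
  have "emeasure ?M (?f -` B \<inter> space ?M) = emeasure lebesgue (?f -` B \<inter> X)"
    using X by (simp add: emeasure_restrict_space)
  also have "\<dots> = emeasure lebesgue ((B - ?I) \<union> ?P2 \<union> ?P3)"
    by (simp only: vimage)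
  also have "\<dots> = emeasure lebesgue (B - ?I) + emeasure lebesgue ?P2 + emeasure lebesgue ?P3"
    using sets translated_sets v by (intro emeasure_Un3) auto
  also have "\<dots> = emeasure lebesgue (B - ?I) + emeasure lebesgue (B \<inter> ?I2) + emeasure lebesgue (B \<inter> ?I1)"
    by (simp only: emeasure_translation)
  also have "\<dots> = emeasure lebesgue ((B - ?I) \<union> (B \<inter> ?I2) \<union> (B \<inter> ?I1))"
    using sets v by (intro emeasure_Un3[symmetric]) auto
  also have "(B - ?I) \<union> (B \<inter> ?I2) \<union> (B \<inter> ?I1) = B" using v by auto
  finally show "emeasure (distr ?M ?M ?f) B = emeasure ?M B"
    using BM B X interval_swap_measurable[OF X v I] by (simp add: emeasure_distr emeasure_restrict_space)
qed simp

lemma funpow_measurable: "f \<in> measurable N N \<Longrightarrow> (f ^^ k) \<in> measurable N N"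
  by (induction k) (auto simp: measurable_ident intro: measurable_comp)

lemma funpow_pair:
  fixes f :: "'a \<Rightarrow> 'a" and g :: "'b \<Rightarrow> 'b"
  shows "(\<lambda>(x, y). (f x, g y)) ^^ k = (\<lambda>(x, y). ((f ^^ k) x, (g ^^ k) y))"
  by (induction k) (auto simp: fun_eq_iff)

lemma pair_map_measurable:
  assumes "f \<in> measurable N1 N1" "g \<in> measurable N2 N2"
  shows "(\<lambda>(x, y). (f x, g y)) \<in> measurable (N1 \<Otimes>\<^sub>M N2) (N1 \<Otimes>\<^sub>M N2)"
  using assms by measurable

lemma pair_map_preserves:
  assumes "sigma_finite_measure N2"
    and f: "f \<in> measurable N1 N1" "distr N1 N1 f = N1"
    and g: "g \<in> measurable N2 N2" "distr N2 N2 g = N2"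
    and C: "C \<in> sets (N1 \<Otimes>\<^sub>M N2)"
  shows "emeasure (N1 \<Otimes>\<^sub>M N2) ((\<lambda>(x, y). (f x, g y)) -` C \<inter> space (N1 \<Otimes>\<^sub>M N2))
       = emeasure (N1 \<Otimes>\<^sub>M N2) C"
proof -
  have "N1 \<Otimes>\<^sub>M N2 = distr (N1 \<Otimes>\<^sub>M N2) (N1 \<Otimes>\<^sub>M N2) (\<lambda>(x, y). (f x, g y))"
    using pair_measure_distr[OF f(1) g(1)] assms(1) f(2) g(2) by simp
  then have "emeasure (N1 \<Otimes>\<^sub>M N2) C
      = emeasure (distr (N1 \<Otimes>\<^sub>M N2) (N1 \<Otimes>\<^sub>M N2) (\<lambda>(x, y). (f x, g y))) C"
    by simp
  also have "\<dots> = emeasure (N1 \<Otimes>\<^sub>M N2) ((\<lambda>(x, y). (f x, g y)) -` C \<inter> space (N1 \<Otimes>\<^sub>M N2))"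
    using C pair_map_measurable[OF f(1) g(1)] by (simp add: emeasure_distr)
  finally show ?thesis by simp
qed

context rank_one
begin

abbreviation "MM \<equiv> M \<Otimes>\<^sub>M M"

lemma X_sets: "X \<in> sets lebesgue"
  unfolding X_eq by (intro sets.countable_UN) auto

lemma space_M: "space M = X"
  by (simp add: rk_M_def X_sets)

lemma sets_M: "B \<in> sets M \<longleftrightarrow> B \<subseteq> X \<and> B \<in> sets lebesgue"
  unfolding rk_M_def by (rule sets_restrict_space_iff) (simp add: X_sets)

lemma emeasure_M: "B \<subseteq> X \<Longrightarrow> emeasure M B = emeasure lebesgue B"
  unfolding rk_M_def by (rule emeasure_restrict_space) (simp_all add: X_sets)

lemma space_MM: "space MM = X \<times> X"
  by (simp add: space_pair_measure space_M)

lemma sigma_finite_M: "sigma_finite_measure M"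
proof
  show "\<exists>A::real set set. countable A \<and> A \<subseteq> sets M \<and> \<Union>A = space M \<and> (\<forall>a\<in>A. emeasure M a \<noteq> \<infinity>)"
  proof (intro exI conjI)
    have sub: "{0..<S n} \<subseteq> X" for n by (auto simp: X_eq)
    show "countable (range (\<lambda>n. {0..<S n}))" by simp
    show "range (\<lambda>n. {0..<S n}) \<subseteq> sets M" using sub by (auto simp: sets_M)
    show "\<Union> (range (\<lambda>n. {0..<S n})) = space M" by (simp add: space_M X_eq)
    show "\<forall>a\<in>range (\<lambda>n. {0..<S n}). emeasure M a \<noteq> \<infinity>"
      using sub emeasure_M S_pos by (auto simp: less_imp_le)
  qed
qed

sublocale M: sigma_finite_measure M
  by (rule sigma_finite_M)

text \<open>T and its inverse are translations on each of the countably many levels (and the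
  inverse fixes the point 0).\<close>

lemma T_measurable: "T \<in> measurable M M"
  unfolding rk_M_def
proof (rule piecewise_translation_measurable[OF X_sets,
      of "(\<lambda>(n, j). (level n j, lev n (Suc j) - lev n j)) ` {(n, j). Suc j < H n}"])
  show "\<exists>(B, e)\<in>(\<lambda>(n, j). (level n j, lev n (Suc j) - lev n j)) ` {(n, j). Suc j < H n}. x \<in> B"
    if "x \<in> X" for x
    using T_cover[OF that] by fastforce
qed (auto simp: rk_level_def T_eq T_X)

lemma Ti_measurable: "Ti \<in> measurable M M"
  unfolding rk_M_def
proof (rule piecewise_translation_measurable[OF X_sets,
      of "insert ({0}, 0) ((\<lambda>(n, j). (level n (Suc j), lev n j - lev n (Suc j))) ` {(n, j). Suc j < H n})"])
  show "\<exists>(B, e)\<in>insert ({0}, 0) ((\<lambda>(n, j). (level n (Suc j), lev n j - lev n (Suc j))) ` {(n, j). Suc j < H n}).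
      x \<in> B" if "x \<in> X" for x
    using Ti_cover[OF that] by (cases "x = 0") fastforce+
qed (auto simp: rk_level_def Ti_eq Ti_X Ti_zero)

end

section \<open>Approximation by unions of grid squares\<close>

lemma density_bound:
  assumes A: "A \<in> fmeasurable N" and F: "F \<in> fmeasurable N"
    and sparse: "measure N (A \<inter> F) \<le> (1 - \<epsilon>) * measure N F" and \<epsilon>: "0 \<le> \<epsilon>" "\<epsilon> \<le> 1"
  shows "\<epsilon> * measure N A \<le> measure N (sym_diff A F)"
proof -
  define a b c where "a = measure N (A \<inter> F)" and "b = measure N (A - F)" and "c = measure N (F - A)"
  have "A = (A \<inter> F) \<union> (A - F)" "F = (A \<inter> F) \<union> (F - A)" by blast+
  then have A_le: "measure N A \<le> a + b" and F_le: "measure N F \<le> a + c"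
    using A F measure_Un_le[of "A \<inter> F" N "A - F"] measure_Un_le[of "A \<inter> F" N "F - A"]
    unfolding a_def b_def c_def by (metis fmeasurableD sets.Int sets.Diff)+
  have "(F - A) - (A - F) = F - A" by blast
  then have sym: "measure N (sym_diff A F) = b + c"
    using measure_Un2[OF fmeasurable_Diff[OF A, of F] fmeasurable_Diff[OF F, of A]] A F
    unfolding b_def c_def by auto
  have "a \<le> (1 - \<epsilon>) * (a + c)" using sparse F_le \<epsilon> unfolding a_def by (meson diff_ge_0_iff_ge mult_left_mono order_trans)
  then have "\<epsilon> * a \<le> c - \<epsilon> * c" by (simp add: algebra_simps)
  moreover have "\<epsilon> * measure N A \<le> \<epsilon> * a + \<epsilon> * b" using A_le \<epsilon> by (simp add: mult_left_mono flip: distrib_left)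
  moreover have "0 \<le> \<epsilon> * c" "\<epsilon> * b \<le> b" using \<epsilon> by (auto simp: c_def b_def mult_left_le_one_le)
  ultimately show ?thesis using sym by linarith
qed

lemma measure_diff_incseq:
  assumes V: "\<And>n. V n \<in> sets N" "incseq V" and B: "B \<in> fmeasurable N" "B \<subseteq> (\<Union>n. V n)"
    and \<epsilon>: "0 < \<epsilon>"
  shows "\<forall>\<^sub>F n in sequentially. measure N (B - V n) < \<epsilon>"
proof -
  have D_sets: "range (\<lambda>n. B - V n) \<subseteq> sets N" using V B by auto
  have D_fin: "emeasure N (B - V n) \<noteq> \<infinity>" for n
    using fmeasurable_Diff[OF B(1) V(1)] by (simp add: fmeasurableD2)
  have "decseq (\<lambda>n. B - V n)" using V(2) by (auto simp: decseq_def incseq_def)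
  moreover have "(\<Inter>n. B - V n) = {}" using B(2) by auto
  ultimately have "(\<lambda>n. measure N (B - V n)) \<longlonglongrightarrow> measure N {}"
    using Lim_measure_decseq[OF D_sets _ D_fin] by metis
  then have "(\<lambda>n. measure N (B - V n)) \<longlonglongrightarrow> 0" by simp
  then show ?thesis using \<epsilon> by (intro order_tendstoD) auto
qed

context rank_one
begin

text \<open>The grid of mesh w t (t \<ge> m) divides the segment [0, S m) occupied by G_m into
  ncells m t cells, and the square [0, S m)^2 into grid squares.\<close>

definition ncells :: "nat \<Rightarrow> nat \<Rightarrow> nat" where
  "ncells m t = H m * 4 ^ (t - m)"

definition seg :: "nat \<Rightarrow> real set" where
  "seg m = {0..<S m}"

definition square :: "nat \<Rightarrow> (real \<times> real) set" where
  "square m = seg m \<times> seg m"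

definition grid_union :: "nat \<Rightarrow> (nat \<times> nat) set \<Rightarrow> (real \<times> real) set" where
  "grid_union t Z = (\<Union>(i, j)\<in>Z. grid t i \<times> grid t j)"

lemma S_ncells: "m \<le> t \<Longrightarrow> S m = real (ncells m t) * w t"
  by (simp add: S_eq ncells_def w_split)

lemma seg_grid: "m \<le> t \<Longrightarrow> seg m = (\<Union>i<ncells m t. grid t i)"
proof (intro equalityI subsetI)
  fix x assume mt: "m \<le> t" and "x \<in> seg m"
  then have x: "0 \<le> x" "x < real (ncells m t) * w t" using S_ncells by (auto simp: seg_def)
  show "x \<in> (\<Union>i<ncells m t. grid t i)"
    using grid_floor[OF x(1), of t] grid_index_lt[OF grid_floor[OF x(1)] x(2)] by blast
next
  fix x assume mt: "m \<le> t" and "x \<in> (\<Union>i<ncells m t. grid t i)"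
  then obtain i where i: "i < ncells m t" "x \<in> grid t i" by blast
  have "real (Suc i) * w t \<le> real (ncells m t) * w t"
    using i w_pos[of t] by (intro mult_right_mono) auto
  then show "x \<in> seg m" using grid_bounds[OF i(2)] grid_nonneg[OF i(2)] S_ncells[OF mt] by (auto simp: seg_def)
qed

lemma grid_sub_seg: "m \<le> t \<Longrightarrow> i < ncells m t \<Longrightarrow> grid t i \<subseteq> seg m"
  using seg_grid[of m t] by auto

lemma seg_X: "seg m \<subseteq> X"
  by (auto simp: seg_def X_eq)

lemma sets_M_seg: "P \<in> sets lebesgue \<Longrightarrow> P \<subseteq> seg m \<Longrightarrow> P \<in> sets M"
  using seg_X[of m] by (auto simp: sets_M)

lemma grid_sets_M: "m \<le> t \<Longrightarrow> i < ncells m t \<Longrightarrow> grid t i \<in> sets M"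
  using grid_sub_seg grid_sets sets_M_seg by blast

lemma square_sets: "square m \<in> sets MM"
  using sets_M_seg[of "seg m" m] by (simp add: square_def seg_def)

lemma emeasure_M_seg: "emeasure M (seg m) = ennreal (S m)"
  using seg_X[of m] S_pos[of m] by (simp add: emeasure_M seg_def less_imp_le)

lemma measure_seg: "measure lebesgue (seg m) = S m"
  using S_pos[of m] by (simp add: seg_def)

lemma measure_grid: "measure lebesgue (grid t i) = w t"
  using w_pos[of t] by (simp add: grid_def algebra_simps)

lemma measure_MM_Times:
  assumes "P \<in> sets lebesgue" "P \<subseteq> seg m" "Q \<in> sets lebesgue" "Q \<subseteq> seg m"
  shows "measure MM (P \<times> Q) = measure lebesgue P * measure lebesgue Q"
proof -
  have fin: "emeasure lebesgue R = ennreal (measure lebesgue R)" if "R \<in> sets lebesgue" "R \<subseteq> seg m" for R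
  proof -
    have "emeasure lebesgue R \<le> emeasure lebesgue (seg m)" using that by (intro emeasure_mono) (auto simp: seg_def)
    also have "\<dots> < \<infinity>" using S_pos[of m] by (simp add: seg_def less_imp_le)
    finally show ?thesis using that by (intro emeasure_eq_measure2 fmeasurableI) auto
  qed
  have "emeasure MM (P \<times> Q) = emeasure lebesgue P * emeasure lebesgue Q"
    using assms seg_X[of m] sets_M_seg by (simp add: M.emeasure_pair_measure_Times emeasure_M)
  also have "\<dots> = ennreal (measure lebesgue P) * ennreal (measure lebesgue Q)"
    by (simp only: fin[OF assms(1,2)] fin[OF assms(3,4)])
  also have "\<dots> = ennreal (measure lebesgue P * measure lebesgue Q)"
    by (simp add: ennreal_mult)
  finally show ?thesis by (simp add: measure_def)
qed

lemma fmeasurable_in_square: "E \<in> sets MM \<Longrightarrow> E \<subseteq> square m \<Longrightarrow> E \<in> fmeasurable MM"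
proof -
  have "seg m \<in> sets M" by (rule sets_M_seg) (auto simp: seg_def)
  then have "emeasure MM (square m) = ennreal (S m) * ennreal (S m)"
    by (simp add: square_def M.emeasure_pair_measure_Times emeasure_M_seg)
  then have "square m \<in> fmeasurable MM"
    using square_sets by (intro fmeasurableI) (auto simp: ennreal_mult_less_top)
  then show "E \<in> sets MM \<Longrightarrow> E \<subseteq> square m \<Longrightarrow> E \<in> fmeasurable MM" by (rule fmeasurableI2)
qed

lemma grid_union_sets:
  "m \<le> t \<Longrightarrow> Z \<subseteq> {..<ncells m t} \<times> {..<ncells m t} \<Longrightarrow> grid_union t Z \<in> sets MM"
  unfolding grid_union_def
  by (intro sets.finite_UN) (auto intro: finite_subset grid_sets_M)

lemma grid_union_sub:
  "m \<le> t \<Longrightarrow> Z \<subseteq> {..<ncells m t} \<times> {..<ncells m t} \<Longrightarrow> grid_union t Z \<subseteq> square m"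
  unfolding grid_union_def square_def using grid_sub_seg by fastforce

lemma grid_union_Times: "grid_union t (Z1 \<times> Z2) = (\<Union>i\<in>Z1. grid t i) \<times> (\<Union>j\<in>Z2. grid t j)"
  unfolding grid_union_def by auto

lemma square_grid: "m \<le> t \<Longrightarrow> square m = grid_union t ({..<ncells m t} \<times> {..<ncells m t})"
  using seg_grid[of m t] by (simp add: square_def grid_union_Times)

lemma grid_square_unique:
  "z \<in> grid t i \<times> grid t j \<Longrightarrow> z \<in> grid t i' \<times> grid t j' \<Longrightarrow> i = i' \<and> j = j'"
  using grid_unique by (cases z) auto

lemma grid_union_compl:
  assumes "m \<le> t" "Z \<subseteq> {..<ncells m t} \<times> {..<ncells m t}"
  shows "grid_union t ({..<ncells m t} \<times> {..<ncells m t} - Z) = square m - grid_union t Z"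
  unfolding square_grid[OF assms(1)] grid_union_def
  using grid_square_unique by fast

text \<open>The union of the cells of mesh w t in [0, S m) that lie inside a set U.  For open U
  these unions increase with t and exhaust U \<inter> [0, S m).\<close>

definition inner_cells :: "nat \<Rightarrow> nat \<Rightarrow> real set \<Rightarrow> real set" where
  "inner_cells m t U = (\<Union>i\<in>{i. i < ncells m t \<and> grid t i \<subseteq> U}. grid t i)"

lemma inner_cells_sets: "inner_cells m t U \<in> sets lebesgue"
  unfolding inner_cells_def by (intro sets.finite_UN grid_sets) auto

lemma inner_cells_sub: "inner_cells m t U \<subseteq> U"
  by (auto simp: inner_cells_def)

lemma in_inner_cells:
  "m \<le> t \<Longrightarrow> x \<in> grid t i \<Longrightarrow> x \<in> seg m \<Longrightarrow> grid t i \<subseteq> U \<Longrightarrow> x \<in> inner_cells m t U"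
  using grid_index_lt[of x t i "ncells m t"] S_ncells[of m t] by (auto simp: seg_def inner_cells_def)

lemma inner_cells_mono:
  assumes "m \<le> t" "t \<le> t'"
  shows "inner_cells m t U \<subseteq> inner_cells m t' U"
proof
  fix x assume "x \<in> inner_cells m t U"
  then obtain i where i: "i < ncells m t" "grid t i \<subseteq> U" "x \<in> grid t i" by (auto simp: inner_cells_def)
  have x0: "0 \<le> x" using grid_nonneg[OF i(3)] .
  have "x \<in> seg m" using grid_sub_seg[OF assms(1) i(1)] i(3) by blast
  moreover have "grid t' (nat \<lfloor>x / w t'\<rfloor>) \<subseteq> U" using grid_nest[OF assms(2) i(3) grid_floor[OF x0]] i(2) by blast
  ultimately show "x \<in> inner_cells m t' U" using in_inner_cells[OF _ grid_floor[OF x0]] assms by auto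
qed

lemma inner_cells_cover:
  assumes U: "open U" and x: "x \<in> U" "x \<in> seg m"
  shows "\<exists>n. x \<in> inner_cells m (m + n) U"
proof -
  have x0: "0 \<le> x" using x by (auto simp: seg_def)
  obtain r where r: "0 < r" "ball x r \<subseteq> U" using U x open_contains_ball by blast
  obtain n where "(1/4::real) ^ n < r" using real_arch_pow_inv[OF r(1), of "1/4"] by auto
  then have "w n < r" by (simp add: rk_w_def)
  moreover have "w (m + n) \<le> w n" by (rule w_mono) simp
  ultimately have wt: "w (m + n) < r" by linarith
  have "grid (m + n) (nat \<lfloor>x / w (m + n)\<rfloor>) \<subseteq> U"
  proof
    fix y assume "y \<in> grid (m + n) (nat \<lfloor>x / w (m + n)\<rfloor>)"
    then have "\<bar>y - x\<bar> < r" using grid_diam[OF _ grid_floor[OF x0]] wt by force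
    then show "y \<in> U" using r(2) by (auto simp: dist_real_def)
  qed
  then have "x \<in> inner_cells m (m + n) U" using in_inner_cells[OF _ grid_floor[OF x0] x(2)] by simp
  then show ?thesis by blast
qed

text \<open>A measurable subset B of [0, S m) can be approximated by unions of grid cells of all
  sufficiently fine meshes: take the cells inside an open set U \<supseteq> B of almost the same
  measure.\<close>

lemma grid_approx_1d:
  assumes B: "B \<in> sets lebesgue" "B \<subseteq> seg m" and \<delta>: "0 < \<delta>"
  shows "\<forall>\<^sub>F t in sequentially.
           \<exists>Z \<subseteq> {..<ncells m t}. measure lebesgue (sym_diff B (\<Union>i\<in>Z. grid t i)) < \<delta>"
proof -
  obtain U where U: "open U" "B \<subseteq> U" "U - B \<in> lmeasurable" "emeasure lebesgue (U - B) < ennreal (\<delta>/2)"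
    using sets_lebesgue_outer_open[OF B(1), of "\<delta>/2"] \<delta> by auto
  have UB: "measure lebesgue (U - B) < \<delta>/2"
    using U(3,4) \<delta> by (simp add: emeasure_eq_measure2 ennreal_less_iff)
  have B_fin: "B \<in> fmeasurable lebesgue"
    by (rule fmeasurableI2[OF lmeasurable_interval(1)[of 0 "S m"]]) (use B in \<open>auto simp: seg_def\<close>)
  have "\<forall>\<^sub>F n in sequentially. measure lebesgue (B - inner_cells m (m + n) U) < \<delta>/2"
  proof (rule measure_diff_incseq)
    show "incseq (\<lambda>n. inner_cells m (m + n) U)"
      unfolding incseq_def by (intro allI impI inner_cells_mono) auto
    show "B \<subseteq> (\<Union>n. inner_cells m (m + n) U)"
    proof
      fix x assume "x \<in> B"
      then obtain n where "x \<in> inner_cells m (m + n) U" using inner_cells_cover[OF U(1)] U(2) B(2) by blast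
      then show "x \<in> (\<Union>n. inner_cells m (m + n) U)" by blast
    qed
  qed (use B_fin inner_cells_sets \<delta> in auto)
  then obtain n0 where n0: "\<And>n. n0 \<le> n \<Longrightarrow> measure lebesgue (B - inner_cells m (m + n) U) < \<delta>/2"
    by (auto simp: eventually_sequentially)
  show ?thesis
    unfolding eventually_sequentially
  proof (intro exI[of _ "m + n0"] allI impI)
    fix t assume t: "m + n0 \<le> t"
    let ?V = "inner_cells m t U"
    have "m + (t - m) = t" using t by simp
    then have small: "measure lebesgue (B - ?V) < \<delta>/2" using n0[of "t - m"] t by simp
    have "sym_diff B ?V \<subseteq> (B - ?V) \<union> (U - B)" using U(2) inner_cells_sub by blast
    moreover have "B - ?V \<in> fmeasurable lebesgue" by (rule fmeasurable_Diff[OF B_fin inner_cells_sets])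
    ultimately have "measure lebesgue (sym_diff B ?V) \<le> measure lebesgue ((B - ?V) \<union> (U - B))"
      using U(3) B inner_cells_sets by (intro measure_mono_fmeasurable fmeasurable.Un) auto
    also have "\<dots> \<le> measure lebesgue (B - ?V) + measure lebesgue (U - B)"
      using U(3) B inner_cells_sets by (intro measure_Un_le) auto
    also have "\<dots> < \<delta>" using small UB by simp
    finally have "measure lebesgue (sym_diff B ?V) < \<delta>" .
    then show "\<exists>Z \<subseteq> {..<ncells m t}. measure lebesgue (sym_diff B (\<Union>i\<in>Z. grid t i)) < \<delta>"
      unfolding inner_cells_def by (intro exI[of _ "{i. i < ncells m t \<and> grid t i \<subseteq> U}"]) auto
  qed
qed

definition grid_approximable :: "nat \<Rightarrow> (real \<times> real) set \<Rightarrow> bool" where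
  "grid_approximable m E \<longleftrightarrow> (\<forall>\<delta>>0. \<forall>\<^sub>F t in sequentially.
     \<exists>Z \<subseteq> {..<ncells m t} \<times> {..<ncells m t}. measure MM (sym_diff E (grid_union t Z)) < \<delta>)"

text \<open>Approximating both factors of a rectangle approximates the rectangle: a point of the
  symmetric difference of the products has a badly approximated coordinate.\<close>

lemma measure_sym_diff_Times:
  assumes A: "A \<in> sets lebesgue" "A \<subseteq> seg m" and B: "B \<in> sets lebesgue" "B \<subseteq> seg m"
    and F1: "F1 \<in> sets lebesgue" "F1 \<subseteq> seg m" and F2: "F2 \<in> sets lebesgue" "F2 \<subseteq> seg m"
  shows "measure MM (sym_diff (A \<times> B) (F1 \<times> F2))
       \<le> measure lebesgue (sym_diff A F1) * S m + S m * measure lebesgue (sym_diff B F2)"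
proof -
  define D1 D2 where "D1 = sym_diff A F1" and "D2 = sym_diff B F2"
  have D1: "D1 \<in> sets lebesgue" "D1 \<subseteq> seg m" and D2: "D2 \<in> sets lebesgue" "D2 \<subseteq> seg m"
    using A B F1 F2 by (auto simp: D1_def D2_def)
  have seg: "seg m \<in> sets lebesgue" by (simp add: seg_def)
  have sub: "sym_diff (A \<times> B) (F1 \<times> F2) \<subseteq> (D1 \<times> seg m) \<union> (seg m \<times> D2)"
    using A B F1 F2 by (auto simp: D1_def D2_def)
  have strips: "D1 \<times> seg m \<in> sets MM" "seg m \<times> D2 \<in> sets MM"
    using sets_M_seg[OF D1] sets_M_seg[OF D2] sets_M_seg[OF seg order.refl] by auto
  have "(D1 \<times> seg m) \<union> (seg m \<times> D2) \<in> fmeasurable MM"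
    using strips D1 D2 by (intro fmeasurable_in_square) (auto simp: square_def)
  moreover have "sym_diff (A \<times> B) (F1 \<times> F2) \<in> sets MM"
    using sets_M_seg[OF A] sets_M_seg[OF B] sets_M_seg[OF F1] sets_M_seg[OF F2] by auto
  ultimately have "measure MM (sym_diff (A \<times> B) (F1 \<times> F2)) \<le> measure MM ((D1 \<times> seg m) \<union> (seg m \<times> D2))"
    using sub by (intro measure_mono_fmeasurable)
  also have "\<dots> \<le> measure MM (D1 \<times> seg m) + measure MM (seg m \<times> D2)"
    using strips by (rule measure_Un_le)
  also have "\<dots> = measure lebesgue D1 * S m + S m * measure lebesgue D2"
    by (simp only: measure_MM_Times[OF D1 seg order.refl] measure_MM_Times[OF seg order.refl D2] measure_seg)
  finally show ?thesis by (simp add: D1_def D2_def)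
qed

lemma grid_approximable_Times:
  assumes A: "A \<in> sets M" and B: "B \<in> sets M"
  shows "grid_approximable m ((A \<times> B) \<inter> square m)"
  unfolding grid_approximable_def
proof (intro allI impI)
  fix \<delta> :: real assume \<delta>: "0 < \<delta>"
  define A' B' where "A' = A \<inter> seg m" and "B' = B \<inter> seg m"
  have AB: "(A \<times> B) \<inter> square m = A' \<times> B'" by (auto simp: A'_def B'_def square_def)
  have A': "A' \<in> sets lebesgue" "A' \<subseteq> seg m" and B': "B' \<in> sets lebesgue" "B' \<subseteq> seg m"
    using A B by (auto simp: A'_def B'_def sets_M seg_def)
  define \<delta>1 where "\<delta>1 = \<delta> / (2 * S m)"
  have \<delta>1: "0 < \<delta>1" "\<delta>1 * S m + S m * \<delta>1 = \<delta>" using \<delta> S_pos[of m] by (simp_all add: \<delta>1_def)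
  have "\<forall>\<^sub>F t in sequentially. m \<le> t \<and>
      (\<exists>Z1 \<subseteq> {..<ncells m t}. measure lebesgue (sym_diff A' (\<Union>i\<in>Z1. grid t i)) < \<delta>1) \<and>
      (\<exists>Z2 \<subseteq> {..<ncells m t}. measure lebesgue (sym_diff B' (\<Union>i\<in>Z2. grid t i)) < \<delta>1)"
    using grid_approx_1d[OF A' \<delta>1(1)] grid_approx_1d[OF B' \<delta>1(1)]
    by (intro eventually_conj eventually_ge_at_top)
  then show "\<forall>\<^sub>F t in sequentially. \<exists>Z \<subseteq> {..<ncells m t} \<times> {..<ncells m t}.
      measure MM (sym_diff ((A \<times> B) \<inter> square m) (grid_union t Z)) < \<delta>"
  proof (rule eventually_mono, elim conjE exE)
    fix t Z1 Z2 assume t: "m \<le> t"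
      and Z1: "Z1 \<subseteq> {..<ncells m t}" "measure lebesgue (sym_diff A' (\<Union>i\<in>Z1. grid t i)) < \<delta>1"
      and Z2: "Z2 \<subseteq> {..<ncells m t}" "measure lebesgue (sym_diff B' (\<Union>i\<in>Z2. grid t i)) < \<delta>1"
    have F: "(\<Union>i\<in>Z. grid t i) \<in> sets lebesgue" "(\<Union>i\<in>Z. grid t i) \<subseteq> seg m"
      if "Z \<subseteq> {..<ncells m t}" for Z
      using that grid_sub_seg[OF t] by (auto intro!: sets.finite_UN grid_sets intro: finite_subset)
    have "measure MM (sym_diff (A' \<times> B') ((\<Union>i\<in>Z1. grid t i) \<times> (\<Union>i\<in>Z2. grid t i)))
        < \<delta>1 * S m + S m * \<delta>1"
      using measure_sym_diff_Times[OF A' B' F[OF Z1(1)] F[OF Z2(1)]] Z1(2) Z2(2) S_pos[of m]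
      by (smt (verit) mult_strict_left_mono mult_strict_right_mono)
    then show "\<exists>Z \<subseteq> {..<ncells m t} \<times> {..<ncells m t}.
        measure MM (sym_diff ((A \<times> B) \<inter> square m) (grid_union t Z)) < \<delta>"
      using Z1(1) Z2(1) AB \<delta>1(2) by (intro exI[of _ "Z1 \<times> Z2"]) (auto simp: grid_union_Times)
  qed
qed

text \<open>Complements: use the complementary set of grid squares.\<close>

lemma grid_approximable_compl:
  assumes E: "E \<in> sets MM" and approx: "grid_approximable m (E \<inter> square m)"
  shows "grid_approximable m ((X \<times> X - E) \<inter> square m)"
  unfolding grid_approximable_def
proof (intro allI impI)
  fix \<delta> :: real assume "0 < \<delta>"
  then have "\<forall>\<^sub>F t in sequentially. m \<le> t \<and>
      (\<exists>Z \<subseteq> {..<ncells m t} \<times> {..<ncells m t}. measure MM (sym_diff (E \<inter> square m) (grid_union t Z)) < \<delta>)"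
    using approx by (intro eventually_conj eventually_ge_at_top) (auto simp: grid_approximable_def)
  then show "\<forall>\<^sub>F t in sequentially. \<exists>Z \<subseteq> {..<ncells m t} \<times> {..<ncells m t}.
      measure MM (sym_diff ((X \<times> X - E) \<inter> square m) (grid_union t Z)) < \<delta>"
  proof (rule eventually_mono, elim conjE exE)
    fix t Z assume t: "m \<le> t" and Z: "Z \<subseteq> {..<ncells m t} \<times> {..<ncells m t}"
      and err: "measure MM (sym_diff (E \<inter> square m) (grid_union t Z)) < \<delta>"
    let ?Z' = "{..<ncells m t} \<times> {..<ncells m t} - Z"
    have sq_X: "square m \<subseteq> X \<times> X" using seg_X by (auto simp: square_def)
    have sub: "sym_diff ((X \<times> X - E) \<inter> square m) (grid_union t ?Z') \<subseteq> sym_diff (E \<inter> square m) (grid_union t Z)"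
      unfolding grid_union_compl[OF t Z] using grid_union_sub[OF t Z] sq_X by auto
    have "sym_diff (E \<inter> square m) (grid_union t Z) \<in> fmeasurable MM"
      using E square_sets grid_union_sets[OF t Z] grid_union_sub[OF t Z]
      by (intro fmeasurable_in_square) auto
    moreover have "sym_diff ((X \<times> X - E) \<inter> square m) (grid_union t ?Z') \<in> sets MM"
      using E square_sets grid_union_sets[OF t, of ?Z'] by (auto simp flip: space_MM)
    ultimately have "measure MM (sym_diff ((X \<times> X - E) \<inter> square m) (grid_union t ?Z'))
        \<le> measure MM (sym_diff (E \<inter> square m) (grid_union t Z))"
      using sub by (intro measure_mono_fmeasurable)
    then show "\<exists>Z \<subseteq> {..<ncells m t} \<times> {..<ncells m t}.
        measure MM (sym_diff ((X \<times> X - E) \<inter> square m) (grid_union t Z)) < \<delta>"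
      using err by (intro exI[of _ ?Z']) auto
  qed
qed

lemma grid_union_error_UN:
  fixes E :: "nat \<Rightarrow> (real \<times> real) set" and Zf :: "nat \<Rightarrow> (nat \<times> nat) set"
  assumes t: "m \<le> t" and E: "\<And>i. E i \<in> sets MM" "\<And>i. E i \<subseteq> square m"
    and Zf: "\<And>i. i < N \<Longrightarrow> Zf i \<subseteq> {..<ncells m t} \<times> {..<ncells m t}"
  shows "measure MM (sym_diff (\<Union>i. E i) (grid_union t (\<Union>i<N. Zf i)))
       \<le> measure MM ((\<Union>i. E i) - (\<Union>i<N. E i)) + (\<Sum>i<N. measure MM (sym_diff (E i) (grid_union t (Zf i))))"
proof -
  define G where "G i = sym_diff (E i) (grid_union t (Zf i))" for i
  define Bad where "Bad = ((\<Union>i. E i) - (\<Union>i<N. E i)) \<union> (\<Union>i<N. G i)"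
  have gu: "grid_union t (\<Union>i<N. Zf i) = (\<Union>i<N. grid_union t (Zf i))"
    unfolding grid_union_def by (rule UN_UN_flatten)
  have sub: "sym_diff (\<Union>i. E i) (grid_union t (\<Union>i<N. Zf i)) \<subseteq> Bad"
    unfolding gu Bad_def G_def by blast
  have UE: "(\<Union>i. E i) \<in> sets MM" by (rule sets.countable_UN) (use E in auto)
  have G_sets: "G i \<in> sets MM" if "i < N" for i
    using E(1)[of i] grid_union_sets[OF t Zf[OF that]] unfolding G_def by blast
  have G_sq: "G i \<subseteq> square m" if "i < N" for i
    using E(2)[of i] grid_union_sub[OF t Zf[OF that]] unfolding G_def by blast
  have tail: "(\<Union>i. E i) - (\<Union>i<N. E i) \<in> sets MM" using UE E(1) by blast
  have Bad: "Bad \<in> fmeasurable MM"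
  proof (rule fmeasurable_in_square)
    show "Bad \<in> sets MM" unfolding Bad_def using tail G_sets by blast
    show "Bad \<subseteq> square m" unfolding Bad_def using E(2) G_sq by blast
  qed
  have "sym_diff (\<Union>i. E i) (grid_union t (\<Union>i<N. Zf i)) \<in> sets MM"
    using UE grid_union_sets[OF t, of "\<Union>i<N. Zf i"] Zf by blast
  then have "measure MM (sym_diff (\<Union>i. E i) (grid_union t (\<Union>i<N. Zf i))) \<le> measure MM Bad"
    using sub Bad by (intro measure_mono_fmeasurable)
  also have "\<dots> \<le> measure MM ((\<Union>i. E i) - (\<Union>i<N. E i)) + measure MM (\<Union>i<N. G i)"
    unfolding Bad_def using tail G_sets by (intro measure_Un_le) blast+
  also have "measure MM (\<Union>i<N. G i) \<le> (\<Sum>i<N. measure MM (G i))"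
    using G_sets by (intro measure_UNION_le) auto
  finally show ?thesis by (simp add: G_def)
qed

lemma grid_approximable_UN:
  fixes A :: "nat \<Rightarrow> (real \<times> real) set"
  assumes A: "\<And>i. A i \<in> sets MM" and approx: "\<And>i. grid_approximable m (A i \<inter> square m)"
  shows "grid_approximable m ((\<Union>i. A i) \<inter> square m)"
  unfolding grid_approximable_def
proof (intro allI impI)
  fix \<delta> :: real assume \<delta>: "0 < \<delta>"
  define E where "E i = A i \<inter> square m" for i
  have E: "E i \<in> sets MM" "E i \<subseteq> square m" for i using A square_sets by (auto simp: E_def)
  have UE: "(\<Union>i. A i) \<inter> square m = (\<Union>i. E i)" by (auto simp: E_def)
  have "(\<Union>i. E i) \<in> sets MM" by (rule sets.countable_UN) (use E in auto)
  then have fm: "(\<Union>i. E i) \<in> fmeasurable MM" by (rule fmeasurable_in_square) (use E in auto)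
  have "\<forall>\<^sub>F n in sequentially. measure MM ((\<Union>i. E i) - (\<Union>i<n. E i)) < \<delta>/2"
  proof (rule measure_diff_incseq)
    show "incseq (\<lambda>n. \<Union>i<n. E i)" by (rule incseq_SucI) (auto simp: lessThan_Suc)
    show "(\<Union>i. E i) \<subseteq> (\<Union>n. \<Union>i<n. E i)" by (blast intro: lessI)
  qed (use E fm \<delta> in auto)
  then obtain N where N: "measure MM ((\<Union>i. E i) - (\<Union>i<N. E i)) < \<delta>/2"
    by (auto simp: eventually_sequentially)
  define \<delta>' where "\<delta>' = \<delta> / (2 * (real N + 1))"
  have \<delta>': "0 < \<delta>'" using \<delta> by (simp add: \<delta>'_def)
  have "real N * \<delta>' = \<delta>/2 * (real N / (real N + 1))" by (simp add: \<delta>'_def)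
  also have "\<dots> < \<delta>/2 * 1" using \<delta> by (intro mult_strict_left_mono) auto
  finally have N\<delta>': "real N * \<delta>' < \<delta>/2" by simp
  have "\<forall>\<^sub>F t in sequentially. \<exists>Z \<subseteq> {..<ncells m t} \<times> {..<ncells m t}.
      measure MM (sym_diff (E i) (grid_union t Z)) < \<delta>'" for i
    using approx[of i] \<delta>' unfolding grid_approximable_def E_def by blast
  then have "\<forall>\<^sub>F t in sequentially. \<forall>i\<in>{..<N}. \<exists>Z \<subseteq> {..<ncells m t} \<times> {..<ncells m t}.
      measure MM (sym_diff (E i) (grid_union t Z)) < \<delta>'"
    by (intro eventually_ball_finite) auto
  with eventually_ge_at_top[of m] show "\<forall>\<^sub>F t in sequentially. \<exists>Z \<subseteq> {..<ncells m t} \<times> {..<ncells m t}.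
      measure MM (sym_diff ((\<Union>i. A i) \<inter> square m) (grid_union t Z)) < \<delta>"
  proof eventually_elim
    case (elim t)
    then have t: "m \<le> t" by simp
    obtain Zf where Zf: "\<forall>i\<in>{..<N}. Zf i \<subseteq> {..<ncells m t} \<times> {..<ncells m t} \<and>
        measure MM (sym_diff (E i) (grid_union t (Zf i))) < \<delta>'"
      using bchoice[OF elim(2)] by blast
    have Z: "(\<Union>i<N. Zf i) \<subseteq> {..<ncells m t} \<times> {..<ncells m t}" using Zf by blast
    have "measure MM (sym_diff (\<Union>i. E i) (grid_union t (\<Union>i<N. Zf i)))
        \<le> measure MM ((\<Union>i. E i) - (\<Union>i<N. E i)) + (\<Sum>i<N. measure MM (sym_diff (E i) (grid_union t (Zf i))))"
      using Zf by (intro grid_union_error_UN[OF t E]) auto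
    also have "(\<Sum>i<N. measure MM (sym_diff (E i) (grid_union t (Zf i)))) \<le> (\<Sum>i<N. \<delta>')"
      using Zf by (intro sum_mono) (auto simp: less_imp_le)
    finally have "measure MM (sym_diff (\<Union>i. E i) (grid_union t (\<Union>i<N. Zf i))) < \<delta>"
      using N N\<delta>' by simp
    then show ?case using Z UE by auto
  qed
qed

text \<open>By induction over the generation of the product \<sigma>-algebra, every measurable set
  is grid approximable inside every square [0, S m)^2.\<close>

lemma grid_approximable_sets:
  assumes "E \<in> sets MM"
  shows "grid_approximable m (E \<inter> square m)"
proof -
  have "E \<in> sigma_sets (X \<times> X) {A \<times> B | A B. A \<in> sets M \<and> B \<in> sets M}"
    using assms by (simp add: sets_pair_measure space_M)
  then show ?thesis
  proof (induction rule: sigma_sets.induct)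
    case (Basic a) then show ?case using grid_approximable_Times by auto
  next
    case Empty
    have "measure MM (sym_diff ({} \<inter> square m) (grid_union t {})) = 0" for t
      by (simp add: grid_union_def)
    then show ?case unfolding grid_approximable_def by (auto intro!: always_eventually exI[of _ "{}"])
  next
    case (Compl a)
    then show ?case using grid_approximable_compl by (simp add: sets_pair_measure space_M)
  next
    case (Union A)
    then show ?case using grid_approximable_UN by (simp add: sets_pair_measure space_M)
  qed
qed

lemma measure_grid_union:
  assumes t: "m \<le> t" and Z: "Z \<subseteq> {..<ncells m t} \<times> {..<ncells m t}" and C: "C \<in> sets MM"
  shows "measure MM (C \<inter> grid_union t Z) = (\<Sum>(i, j)\<in>Z. measure MM (C \<inter> (grid t i \<times> grid t j)))"
proof -
  let ?sq = "\<lambda>p. C \<inter> (grid t (fst p) \<times> grid t (snd p))"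
  have eq: "C \<inter> grid_union t Z = (\<Union>p\<in>Z. ?sq p)" by (auto simp: grid_union_def)
  have fin: "finite Z" using Z by (rule finite_subset) simp
  have disj: "disjoint_family_on ?sq Z"
    unfolding disjoint_family_on_def
  proof (intro ballI impI)
    fix p q assume "p \<in> Z" "q \<in> Z" "p \<noteq> q"
    then show "?sq p \<inter> ?sq q = {}"
      using grid_square_unique[of _ t "fst p" "snd p" "fst q" "snd q"] by (auto simp: prod_eq_iff)
  qed
  have sq: "?sq p \<in> fmeasurable MM" if "p \<in> Z" for p
  proof (rule fmeasurable_in_square)
    have "fst p < ncells m t" "snd p < ncells m t" using that Z by auto
    then show "?sq p \<in> sets MM" "?sq p \<subseteq> square m"
      using C grid_sets_M[OF t] grid_sub_seg[OF t] by (auto simp: square_def)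
  qed
  have "measure MM (\<Union>p\<in>Z. ?sq p) = (\<Sum>p\<in>Z. measure MM (?sq p))"
    using fin disj sq by (intro measure_finite_Union) (auto simp: fmeasurableD2)
  then show ?thesis unfolding eq by (simp add: split_def)
qed

text \<open>Lebesgue density along the grid: a set of positive measure fills some grid square
  up to a fraction 1 - \<epsilon>, at meshes w t for arbitrarily large t in a prescribed infinite set.\<close>

lemma grid_density:
  assumes A: "A \<in> sets MM" "A \<subseteq> square m" "0 < measure MM A" and Q: "infinite Q"
    and \<epsilon>: "0 < \<epsilon>" "\<epsilon> \<le> 1"
  shows "\<exists>t\<in>Q. m \<le> t \<and> (\<exists>i<ncells m t. \<exists>j<ncells m t.
           (1 - \<epsilon>) * (w t)^2 < measure MM (A \<inter> (grid t i \<times> grid t j)))"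
proof (rule ccontr)
  assume sparse: "\<not> ?thesis"
  define \<delta> where "\<delta> = \<epsilon> * measure MM A / 2"
  have \<delta>: "0 < \<delta>" using A(3) \<epsilon> by (simp add: \<delta>_def)
  have "grid_approximable m A" using grid_approximable_sets[OF A(1), of m] A(2) by (simp add: Int_absorb2)
  then have "\<forall>\<^sub>F t in sequentially. m \<le> t \<and>
      (\<exists>Z \<subseteq> {..<ncells m t} \<times> {..<ncells m t}. measure MM (sym_diff A (grid_union t Z)) < \<delta>)"
    using \<delta> by (intro eventually_conj eventually_ge_at_top) (auto simp: grid_approximable_def)
  then obtain T where T: "\<And>t. T \<le> t \<Longrightarrow> m \<le> t \<and>
      (\<exists>Z \<subseteq> {..<ncells m t} \<times> {..<ncells m t}. measure MM (sym_diff A (grid_union t Z)) < \<delta>)"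
    by (auto simp: eventually_sequentially)
  obtain t where "t \<in> Q" "T \<le> t" using Q by (auto simp: infinite_nat_iff_unbounded_le)
  then obtain Z where t: "t \<in> Q" "m \<le> t" and Z: "Z \<subseteq> {..<ncells m t} \<times> {..<ncells m t}"
    and err: "measure MM (sym_diff A (grid_union t Z)) < \<delta>"
    using T by blast
  let ?F = "grid_union t Z" and ?cell = "\<lambda>i j. grid t i \<times> grid t j"
  text \<open>Every grid square of the approximation is sparse for A, hence so is their union.\<close>
  have cell: "measure MM (A \<inter> ?cell i j) \<le> (1 - \<epsilon>) * measure MM (square m \<inter> ?cell i j)"
    if "(i, j) \<in> Z" for i j
  proof -
    have i: "i < ncells m t" and j: "j < ncells m t" using that Z by auto
    have "square m \<inter> ?cell i j = ?cell i j"
      using grid_sub_seg[OF t(2) i] grid_sub_seg[OF t(2) j] by (auto simp: square_def)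
    then have "measure MM (square m \<inter> ?cell i j) = (w t)^2"
      using measure_MM_Times[OF grid_sets grid_sub_seg[OF t(2) i] grid_sets grid_sub_seg[OF t(2) j]]
      by (simp add: measure_grid power2_eq_square)
    moreover have "\<not> (1 - \<epsilon>) * (w t)^2 < measure MM (A \<inter> ?cell i j)" using sparse t i j by blast
    ultimately show ?thesis by simp
  qed
  have "measure MM (A \<inter> ?F) = (\<Sum>(i, j)\<in>Z. measure MM (A \<inter> ?cell i j))"
    by (rule measure_grid_union[OF t(2) Z A(1)])
  also have "\<dots> \<le> (\<Sum>(i, j)\<in>Z. (1 - \<epsilon>) * measure MM (square m \<inter> ?cell i j))"
    using cell by (intro sum_mono) (auto split: prod.splits)
  also have "\<dots> = (1 - \<epsilon>) * measure MM (square m \<inter> ?F)"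
    using measure_grid_union[OF t(2) Z square_sets] by (simp add: sum_distrib_left case_prod_beta')
  also have "square m \<inter> ?F = ?F" using grid_union_sub[OF t(2) Z] by auto
  finally have "measure MM (A \<inter> ?F) \<le> (1 - \<epsilon>) * measure MM ?F" .
  then have "\<epsilon> * measure MM A \<le> measure MM (sym_diff A ?F)"
    using A \<epsilon> grid_union_sets[OF t(2) Z] grid_union_sub[OF t(2) Z]
    by (intro density_bound fmeasurable_in_square) auto
  then show False using err mult_pos_pos[OF \<epsilon>(1) A(3)] unfolding \<delta>_def by linarith
qed

end

section \<open>Recurrence from a local measure preserving swap\<close>

text \<open>Suppose that on R the map F agrees with a measurable
  map \<Phi> that preserves the measure of A \<inter> R' and maps only points of R into R', where R and
  R' lie in a set Q of finite measure in which A has small complement.  Then F returns a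
  positive part of A to A: most of R' lies in A, its \<Phi>-preimage has the same measure and
  lies in R, and at most the complement of A in Q is lost there.\<close>

lemma recurrence_from_swap:
  assumes F: "F \<in> measurable N N" and \<Phi>: "\<Phi> \<in> measurable N N" and A: "A \<in> sets N"
    and Q: "Q \<in> fmeasurable N" and R: "R \<in> sets N" "R \<subseteq> Q" and R': "R' \<in> sets N" "R' \<subseteq> Q"
    and preserves: "emeasure N (\<Phi> -` (A \<inter> R') \<inter> space N) = emeasure N (A \<inter> R')"
    and into: "\<Phi> -` R' \<inter> space N \<subseteq> R"
    and agree: "\<And>z. z \<in> R \<Longrightarrow> F z = \<Phi> z"
    and dense: "2 * measure N (Q - A) < measure N R'"
  shows "0 < emeasure N (F -` A \<inter> A)"
proof -
  define G where "G = \<Phi> -` (A \<inter> R') \<inter> space N"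
  have G_sets: "G \<in> sets N" unfolding G_def using \<Phi> A R' by (intro measurable_sets) auto
  have GR: "G \<subseteq> R" using into by (auto simp: G_def)
  have fin: "B \<in> fmeasurable N" if "B \<in> sets N" "B \<subseteq> Q" for B
    using that by (intro fmeasurableI2[OF Q]) auto
  have small: "measure N (B - A) \<le> measure N (Q - A)" if "B \<in> sets N" "B \<subseteq> Q" for B
    using that A Q by (intro measure_mono_fmeasurable fin) auto
  have split: "R' = (A \<inter> R') \<union> (R' - A)" by blast
  have "measure N R' \<le> measure N (A \<inter> R') + measure N (R' - A)"
    using A R' by (subst (1) split) (intro measure_Un_le, auto)
  moreover have "measure N G = measure N (A \<inter> R')" using preserves by (simp add: G_def measure_def)
  moreover have "measure N G \<le> measure N (G \<inter> A) + measure N (G - A)"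
  proof -
    have split: "G = (G \<inter> A) \<union> (G - A)" by blast
    show ?thesis using A G_sets by (subst (1) split) (intro measure_Un_le, auto)
  qed
  moreover have "measure N (R' - A) \<le> measure N (Q - A)" by (rule small[OF R'])
  moreover have "measure N (G - A) \<le> measure N (Q - A)" using GR R(2) by (intro small G_sets) auto
  ultimately have "0 < measure N (G \<inter> A)" using dense by linarith
  moreover have GA: "G \<inter> A \<in> fmeasurable N" using G_sets A GR R(2) by (intro fin) auto
  ultimately have "0 < emeasure N (G \<inter> A)" by (simp add: emeasure_eq_measure2)
  also have "emeasure N (G \<inter> A) \<le> emeasure N (F -` A \<inter> A)"
  proof (rule emeasure_mono)
    show "G \<inter> A \<subseteq> F -` A \<inter> A" using agree GR by (auto simp: G_def)
    have "F -` A \<inter> space N \<in> sets N" using F A by (rule measurable_sets)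
    then have "(F -` A \<inter> space N) \<inter> A \<in> sets N" using A by (rule sets.Int)
    moreover have "(F -` A \<inter> space N) \<inter> A = F -` A \<inter> A" using sets.sets_into_space[OF A] by blast
    ultimately show "F -` A \<inter> A \<in> sets N" by simp
  qed
  finally show ?thesis .
qed

definition half :: "real \<Rightarrow> real \<Rightarrow> bool \<Rightarrow> real set" where
  "half u v b = (if b then {u + v..<u + 2 * v} else {u..<u + v})"

lemma half_sub: "0 < v \<Longrightarrow> half u v b \<subseteq> {u..<u + 2 * v}"
  by (auto simp: half_def)

lemma interval_swap_into_half: "0 < v \<Longrightarrow> interval_swap u v x \<in> half u v (\<not> b) \<Longrightarrow> x \<in> half u v b"
  by (cases b) (auto simp: half_def interval_swap_def split: if_splits)

lemma emeasure_half: "0 < v \<Longrightarrow> emeasure lebesgue (half u v b) = ennreal v"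
  by (auto simp: half_def)

context rank_one
begin

lemma interval_swap_measurable_M:
  "0 < v \<Longrightarrow> {u..<u + 2 * v} \<subseteq> X \<Longrightarrow> interval_swap u v \<in> measurable M M"
  unfolding rk_M_def by (rule interval_swap_measurable[OF X_sets])

lemma interval_swap_distr_M:
  "0 < v \<Longrightarrow> {u..<u + 2 * v} \<subseteq> X \<Longrightarrow> distr M M (interval_swap u v) = M"
  unfolding rk_M_def by (rule interval_swap_distr[OF X_sets])

lemma half_sets_M: "0 < v \<Longrightarrow> {z..<z + 2 * v} \<subseteq> X \<Longrightarrow> half z v e \<in> sets M"
  using half_sub[of v z e] by (auto simp: sets_M half_def)

lemma emeasure_M_half: "0 < v \<Longrightarrow> {z..<z + 2 * v} \<subseteq> X \<Longrightarrow> emeasure M (half z v e) = ennreal v"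
  using half_sub[of v z e] emeasure_half[of v z e] by (simp add: emeasure_M)

lemma return_from_swaps:
  fixes f g :: "real \<Rightarrow> real" and e e' :: bool
  assumes A: "A \<in> sets MM" and f: "f \<in> measurable M M" and g: "g \<in> measurable M M"
    and v: "0 < v" and I: "{u..<u + 2 * v} \<subseteq> Q1" and J: "{u'..<u' + 2 * v} \<subseteq> Q2"
    and Q: "Q1 \<times> Q2 \<in> fmeasurable MM" and dense: "2 * measure MM (Q1 \<times> Q2 - A) < v\<^sup>2"
    and f_swap: "\<And>x. x \<in> half u v e \<Longrightarrow> f x = interval_swap u v x"
    and g_swap: "\<And>y. y \<in> half u' v e' \<Longrightarrow> g y = interval_swap u' v y"
  shows "0 < emeasure MM ((\<lambda>(x, y). (f x, g y)) -` A \<inter> A)"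
proof -
  have QX: "Q1 \<times> Q2 \<subseteq> X \<times> X" using sets.sets_into_space[OF fmeasurableD[OF Q]] by (simp add: space_MM)
  have "u \<in> Q1" "u' \<in> Q2" using I J v by auto
  then have IX: "{u..<u + 2 * v} \<subseteq> X" and JX: "{u'..<u' + 2 * v} \<subseteq> X" using I J QX by blast+
  note half_M = half_sets_M[OF v]
  have measure_R': "measure MM (half u v (\<not> e) \<times> half u' v (\<not> e')) = v\<^sup>2"
  proof -
    have "emeasure MM (half u v (\<not> e) \<times> half u' v (\<not> e')) = ennreal v * ennreal v"
      using half_M[OF IX] half_M[OF JX] emeasure_M_half[OF v IX] emeasure_M_half[OF v JX]
      by (simp add: M.emeasure_pair_measure_Times)
    then show ?thesis using v by (simp add: measure_def ennreal_mult[symmetric] power2_eq_square)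
  qed
  show ?thesis
  proof (rule recurrence_from_swap[where \<Phi>="\<lambda>(x, y). (interval_swap u v x, interval_swap u' v y)"
        and Q="Q1 \<times> Q2" and R="half u v e \<times> half u' v e'" and R'="half u v (\<not> e) \<times> half u' v (\<not> e')"])
    show "(\<lambda>(x, y). (f x, g y)) \<in> measurable MM MM" using f g by (rule pair_map_measurable)
    show "(\<lambda>(x, y). (interval_swap u v x, interval_swap u' v y)) \<in> measurable MM MM"
      using interval_swap_measurable_M[OF v IX] interval_swap_measurable_M[OF v JX] by (rule pair_map_measurable)
    show "half u v e \<times> half u' v e' \<in> sets MM" "half u v (\<not> e) \<times> half u' v (\<not> e') \<in> sets MM"
      using half_M[OF IX] half_M[OF JX] by auto
    show "half u v e \<times> half u' v e' \<subseteq> Q1 \<times> Q2" "half u v (\<not> e) \<times> half u' v (\<not> e') \<subseteq> Q1 \<times> Q2"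
      using half_sub[OF v] I J by blast+
    show "emeasure MM ((\<lambda>(x, y). (interval_swap u v x, interval_swap u' v y)) -`
        (A \<inter> half u v (\<not> e) \<times> half u' v (\<not> e')) \<inter> space MM) = emeasure MM (A \<inter> half u v (\<not> e) \<times> half u' v (\<not> e'))"
      using A half_M[OF IX] half_M[OF JX]
      by (intro pair_map_preserves sigma_finite_M interval_swap_measurable_M interval_swap_distr_M v IX JX) auto
    show "(\<lambda>(x, y). (interval_swap u v x, interval_swap u' v y)) -` (half u v (\<not> e) \<times> half u' v (\<not> e')) \<inter> space MM
        \<subseteq> half u v e \<times> half u' v e'"
      using interval_swap_into_half[OF v] by auto
    show "(case z of (x, y) \<Rightarrow> (f x, g y)) = (case z of (x, y) \<Rightarrow> (interval_swap u v x, interval_swap u' v y))"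
      if "z \<in> half u v e \<times> half u' v e'" for z
      using that f_swap g_swap by auto
  qed (use A Q dense measure_R' in auto)
qed

end

section \<open>The copies of G_t inside G_(t+1)\<close>

context rank_one
begin

lemma off_mono: "r \<le> r' \<Longrightarrow> off n r \<le> off n r'"
  by (auto simp: off_def)

lemma level_copy:
  "r < 4 \<Longrightarrow> j < H n \<Longrightarrow>
   level (Suc n) (off n r + j) = {lev n j + real r * w (Suc n) ..< lev n j + real r * w (Suc n) + w (Suc n)}"
  by (simp add: rk_level_def lev_off del: rk_lev.simps)

lemma T_pow_copy:
  assumes r: "r \<le> r'" "r' < 4" and j: "j < H n" and x: "x \<in> level (Suc n) (off n r + j)"
  shows "(T ^^ (off n r' - off n r)) x = x + real (r' - r) * w (Suc n)"
proof -
  have eq: "off n r + j + (off n r' - off n r) = off n r' + j" using off_mono[OF r(1)] by simp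
  have "off n r + j + (off n r' - off n r) < H (Suc n)" using off_copy_le[OF r(2), of n] j eq by simp
  then have "(T ^^ (off n r' - off n r)) x = x - lev (Suc n) (off n r + j) + lev (Suc n) (off n r' + j)"
    by (subst eq[symmetric]) (rule T_pow[OF x])
  also have "\<dots> = x + real (r' - r) * w (Suc n)"
    using lev_off[OF _ j, of r] lev_off[OF r(2) j] r by (simp add: of_nat_diff algebra_simps del: rk_lev.simps)
  finally show ?thesis .
qed

lemma Ti_pow_copy:
  assumes r: "r \<le> r'" "r' < 4" and j: "j < H n" and x: "x \<in> level (Suc n) (off n r' + j)"
  shows "(Ti ^^ (off n r' - off n r)) x = x - real (r' - r) * w (Suc n)"
proof -
  have eq: "off n r' + j - (off n r' - off n r) = off n r + j" using off_mono[OF r(1)] by simp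
  have "off n r' + j < H (Suc n)" using off_copy_le[OF r(2), of n] j by simp
  moreover have "off n r' - off n r \<le> off n r' + j" by simp
  ultimately have "(Ti ^^ (off n r' - off n r)) x = x - lev (Suc n) (off n r' + j) + lev (Suc n) (off n r + j)"
    by (subst eq[symmetric]) (rule Ti_pow[OF x])
  also have "\<dots> = x - real (r' - r) * w (Suc n)"
    using lev_off[OF _ j, of r] lev_off[OF r(2) j] r by (simp add: of_nat_diff algebra_simps del: rk_lev.simps)
  finally show ?thesis .
qed

lemma first_quarters_swap:
  assumes i0: "i0 < H t"
  defines "u \<equiv> lev t i0" and "v \<equiv> w (Suc t)"
  shows "{u..<u + 2 * v} \<subseteq> level t i0"
    and "x \<in> half u v False \<Longrightarrow> (T ^^ (H t + a t)) x = interval_swap u v x"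
    and "x \<in> half u v True \<Longrightarrow> (Ti ^^ (H t + a t)) x = interval_swap u v x"
proof -
  have v: "0 < v" "w t = 4 * v" by (simp_all add: v_def w_pos w_Suc)
  show "{u..<u + 2 * v} \<subseteq> level t i0" using v by (auto simp: u_def rk_level_def)
  have step: "off t 1 - off t 0 = H t + a t" by (simp add: off_def)
  have half_level: "half u v False = level (Suc t) (off t 0 + i0)" "half u v True = level (Suc t) (off t 1 + i0)"
    using level_copy[OF _ i0, of 0] level_copy[OF _ i0, of 1] by (simp_all add: half_def u_def v_def add.commute)
  show "x \<in> half u v False \<Longrightarrow> (T ^^ (H t + a t)) x = interval_swap u v x"
    using T_pow_copy[of 0 1 i0 t x, unfolded step half_level(1)[symmetric]] i0 v(1)
    by (auto simp: half_def interval_swap_def v_def)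
  show "x \<in> half u v True \<Longrightarrow> (Ti ^^ (H t + a t)) x = interval_swap u v x"
    using Ti_pow_copy[of 0 1 i0 t x, unfolded step half_level(2)[symmetric]] i0 v(1)
    by (auto simp: half_def interval_swap_def v_def)
qed

lemma last_quarters_swap:
  assumes j0: "j0 < H t"
  defines "u \<equiv> lev t j0 + 2 * w (Suc t)" and "v \<equiv> w (Suc t)"
  shows "{u..<u + 2 * v} \<subseteq> level t j0"
    and "y \<in> half u v False \<Longrightarrow> (T ^^ (H t + c t)) y = interval_swap u v y"
proof -
  have v: "0 < v" "w t = 4 * v" by (simp_all add: v_def w_pos w_Suc)
  show "{u..<u + 2 * v} \<subseteq> level t j0" using v by (auto simp: u_def v_def rk_level_def)
  have step: "off t 3 - off t 2 = H t + c t" by (simp add: off_def)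
  have half_level: "half u v False = level (Suc t) (off t 2 + j0)"
    using level_copy[OF _ j0, of 2] by (simp add: half_def u_def v_def)
  show "y \<in> half u v False \<Longrightarrow> (T ^^ (H t + c t)) y = interval_swap u v y"
    using T_pow_copy[of 2 3 j0 t y, unfolded step half_level[symmetric]] j0 v(1)
    by (auto simp: half_def interval_swap_def v_def)
qed

end

section \<open>Conservativity of the product maps\<close>

context rank_one
begin

lemma XX_squares: "X \<times> X = (\<Union>m. square m)"
proof
  show "X \<times> X \<subseteq> (\<Union>m. square m)"
  proof
    fix z assume "z \<in> X \<times> X"
    then obtain x y n1 n2 where z: "z = (x, y)" "0 \<le> x" "x < S n1" "0 \<le> y" "y < S n2"
      by (auto simp: X_eq)
    moreover have "S n1 \<le> S (max n1 n2)" "S n2 \<le> S (max n1 n2)" by (auto intro: S_mono)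
    ultimately have "z \<in> square (max n1 n2)" by (auto simp: square_def seg_def)
    then show "z \<in> (\<Union>m. square m)" by blast
  qed
qed (use seg_X in \<open>auto simp: square_def\<close>)

text \<open>Since the squares [0, S m)^2 exhaust X \<times> X, a set of positive measure has a part of
  positive measure in one of them.\<close>

lemma positive_in_square:
  assumes A: "A \<in> sets MM" "0 < emeasure MM A"
  shows "\<exists>m. 0 < emeasure MM (A \<inter> square m)"
proof (rule ccontr)
  assume "\<nexists>m. 0 < emeasure MM (A \<inter> square m)"
  then have "A \<inter> square m \<in> null_sets MM" for m using A(1) square_sets by (auto simp: null_sets_def)
  then have "(\<Union>m. A \<inter> square m) \<in> null_sets MM" by blast
  moreover have "(\<Union>m. A \<inter> square m) = A"
    using sets.sets_into_space[OF A(1)] XX_squares by (auto simp: space_MM)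
  ultimately show False using A(2) by (simp add: null_sets_def)
qed

lemma dense_level_square:
  assumes A: "A \<in> sets MM" "0 < emeasure MM A" and Q: "infinite Q"
  shows "\<exists>t\<in>Q. \<exists>i0<H t. \<exists>j0<H t. level t i0 \<times> level t j0 \<in> fmeasurable MM \<and>
           32 * measure MM (level t i0 \<times> level t j0 - A) < (w t)\<^sup>2"
proof -
  have "\<exists>m. 0 < emeasure MM (A \<inter> square m)" by (rule positive_in_square[OF A])
  then obtain m where m: "0 < emeasure MM (A \<inter> square m)" by blast
  have A': "A \<inter> square m \<in> sets MM" "A \<inter> square m \<subseteq> square m" using A(1) square_sets by auto
  then have "A \<inter> square m \<in> fmeasurable MM" by (rule fmeasurable_in_square)
  then have "0 < measure MM (A \<inter> square m)" using m by (simp add: emeasure_eq_measure2)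
  then have "\<exists>t\<in>Q. m \<le> t \<and> (\<exists>i<ncells m t. \<exists>j<ncells m t.
      (1 - 1/32) * (w t)\<^sup>2 < measure MM (A \<inter> square m \<inter> (grid t i \<times> grid t j)))"
    by (rule grid_density[OF A' _ Q]) simp_all
  then obtain t i j where t: "t \<in> Q" "m \<le> t" and ij: "i < ncells m t" "j < ncells m t"
    and dense: "(1 - 1/32) * (w t)\<^sup>2 < measure MM (A \<inter> square m \<inter> (grid t i \<times> grid t j))"
    by blast
  have "real (ncells m t) * w t \<le> real (H t) * w t"
    using S_ncells[OF t(2)] S_eq[of t] S_mono[OF t(2)] by simp
  then have "ncells m t \<le> H t" using w_pos[of t] by (simp add: mult_le_cancel_right)
  then obtain i0 j0 where i0: "i0 < H t" "cell t i0 = i" and j0: "j0 < H t" "cell t j0 = j"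
    using cell_surj[of i t] cell_surj[of j t] ij by auto
  define C where "C = grid t i \<times> grid t j"
  have C: "C = level t i0 \<times> level t j0" using i0 j0 by (simp add: C_def level_grid)
  have C_sq: "C \<subseteq> square m" using grid_sub_seg[OF t(2) ij(1)] grid_sub_seg[OF t(2) ij(2)] by (auto simp: C_def square_def)
  have C_sets: "C \<in> sets MM" using grid_sets_M[OF t(2) ij(1)] grid_sets_M[OF t(2) ij(2)] by (simp add: C_def)
  have C_fm: "C \<in> fmeasurable MM" by (rule fmeasurable_in_square[OF C_sets C_sq])
  have "measure MM C = (w t)\<^sup>2"
    using measure_MM_Times[OF grid_sets grid_sub_seg[OF t(2) ij(1)] grid_sets grid_sub_seg[OF t(2) ij(2)]]
    by (simp add: C_def measure_grid power2_eq_square)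
  moreover have "C - A = C - (A \<inter> square m \<inter> C)" using C_sq by auto
  moreover have "measure MM (C - (A \<inter> square m \<inter> C)) = measure MM C - measure MM (A \<inter> square m \<inter> C)"
    using C_sets A' C_fm by (intro measure_Diff) (auto simp: fmeasurableD2)
  ultimately have "32 * measure MM (C - A) < (w t)\<^sup>2" using dense by (simp add: C_def)
  then show ?thesis using t(1) i0(1) j0(1) C_fm unfolding C by blast
qed

text \<open>If some power f^(H_t + a_t) swaps the first two quarters of the levels of G_t (as T
  and its inverse do), then for every A of positive measure some power of
  (x, y) \<mapsto> (f^p x, T^q y) returns a positive part of A to A; the exponent is the k with
  H_t + a_t = k p and H_t + c_t = k q.\<close>

lemma returns_of_pair_powers:
  assumes Q: "infinite Q"
    and period: "\<And>t. t \<in> Q \<Longrightarrow> \<exists>k. H t + a t = k * p \<and> H t + c t = k * q"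
    and f: "f \<in> measurable M M"
    and f_swap: "\<And>t i0 x. i0 < H t \<Longrightarrow> x \<in> half (lev t i0) (w (Suc t)) e \<Longrightarrow>
                   (f ^^ (H t + a t)) x = interval_swap (lev t i0) (w (Suc t)) x"
    and A: "A \<in> sets MM" "0 < emeasure MM A"
  shows "\<exists>n\<ge>1. 0 < emeasure MM (((\<lambda>(x, y). ((f ^^ p) x, (T ^^ q) y)) ^^ n) -` A \<inter> A)"
proof -
  obtain t i0 j0 where t: "t \<in> Q" "i0 < H t" "j0 < H t" and fm: "level t i0 \<times> level t j0 \<in> fmeasurable MM"
    and dense: "32 * measure MM (level t i0 \<times> level t j0 - A) < (w t)\<^sup>2"
    using dense_level_square[OF A Q] by blast
  obtain k where k: "H t + a t = k * p" "H t + c t = k * q" using period[OF t(1)] by blast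
  have "k \<noteq> 0"
  proof
    assume "k = 0"
    then have "H t + a t = 0" using k(1) by simp
    then show False using H_pos[of t] by simp
  qed
  define v u u' where "v = w (Suc t)" and "u = lev t i0" and "u' = lev t j0 + 2 * w (Suc t)"
  note first = first_quarters_swap[OF t(2), folded v_def u_def]
  note last = last_quarters_swap[OF t(3), folded v_def u'_def]
  have "((\<lambda>(x, y). ((f ^^ p) x, (T ^^ q) y)) ^^ k) = (\<lambda>(x, y). ((f ^^ (H t + a t)) x, (T ^^ (H t + c t)) y))"
    by (simp add: funpow_pair k funpow_mult mult.commute)
  moreover have "0 < emeasure MM ((\<lambda>(x, y). ((f ^^ (H t + a t)) x, (T ^^ (H t + c t)) y)) -` A \<inter> A)"
  proof (rule return_from_swaps[OF A(1) _ _ _ first(1) last(1) fm])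
    show "(f ^^ (H t + a t)) \<in> measurable M M" "(T ^^ (H t + c t)) \<in> measurable M M"
      using f T_measurable by (auto intro: funpow_measurable)
    show "0 < v" by (simp add: v_def w_pos)
    show "2 * measure MM (level t i0 \<times> level t j0 - A) < v\<^sup>2"
      using dense by (simp add: v_def w_Suc power_divide)
  qed (use f_swap[OF t(2), folded v_def u_def] last(2) in auto)
  ultimately show ?thesis using \<open>k \<noteq> 0\<close> by (intro exI[of _ k]) auto
qed

theorem conservative_pair_powers:
  assumes "infinite Q"
    and "\<And>t. t \<in> Q \<Longrightarrow> \<exists>k. H t + a t = k * p \<and> H t + c t = k * q"
  shows "conservative MM (\<lambda>(x, y). ((T ^^ p) x, (T ^^ q) y))"
    and "conservative MM (\<lambda>(x, y). ((Ti ^^ p) x, (T ^^ q) y))"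
  unfolding conservative_def
  using returns_of_pair_powers[OF assms T_measurable first_quarters_swap(2)]
    returns_of_pair_powers[OF assms Ti_measurable first_quarters_swap(3)]
  by auto

end

text \<open>The set of n with q_n/q = p_n/p \<in> \<nat> consists of n with H_n + a_n = k p and
  H_n + c_n = k q for some k.\<close>

theorem mainTheorem2:
  fixes a b c d :: "nat \<Rightarrow> nat" and p q :: nat
  assumes pos: "\<And>n. a n > 0" "\<And>n. b n > 0" "\<And>n. c n > 0" "\<And>n. d n > 0"
    and W: "in_W a b c d"
    and pq: "p > 0" "q > 0"
    and inf: "infinite {n. \<exists>k::nat. real (rk_q a b c d n) / real q = real k
                                  \<and> real (rk_p a b c d n) / real p = real k}"
  shows "conservative (rk_M a b c d \<Otimes>\<^sub>M rk_M a b c d)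
           (\<lambda>(x, y). ((rk_T a b c d ^^ p) x, (rk_T a b c d ^^ q) y))
       \<and> conservative (rk_M a b c d \<Otimes>\<^sub>M rk_M a b c d)
           (\<lambda>(x, y). ((rk_Tinv a b c d ^^ p) x, (rk_T a b c d ^^ q) y))"
proof -
  interpret rank_one a b c d using pos(4) by unfold_locales
  have period: "\<exists>k. H n + a n = k * p \<and> H n + c n = k * q"
    if n: "n \<in> {n. \<exists>k::nat. real (rk_q a b c d n) / real q = real k \<and> real (rk_p a b c d n) / real p = real k}"
    for n
  proof -
    obtain k :: nat where k: "real (rk_q a b c d n) / real q = real k" "real (rk_p a b c d n) / real p = real k"
      using n by blast
    have "real (H n + a n) = real (k * p)" "real (H n + c n) = real (k * q)"
      using k pq by (simp_all add: rk_p_def rk_q_def field_simps)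
    then show ?thesis by (metis of_nat_eq_iff)
  qed
  show ?thesis using conservative_pair_powers[OF inf period] by blast
qed

end
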